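(* Let $\Gamma$ be a primitive strongly regular graph with parameters $(v,k,\lambda,\mu)$, eigenvalues $k > e^+ > 0 > e^-$, and let $m^-$ be the multiplicity of $e^-$. Suppose $ve^- = m^-(e^- - k)$. Let $Y, Z$ be two different Delsarte cocliques of $\Gamma$. For a vertex $z \in Z \setminus Y$ let $b_z = \{ y \in Y : y \sim z \}$. Then: \begin{enumerate} \item[(a)] The set $\mathcal{B} := \{ b_z : z \in Z \setminus Y\}$ is a symmetric $2$-$\left( \frac{(e^+)^2 - (e^-)^{2}}{(e^+)^{2} + e^-}, -e^-, -(e^+)^2 - e^- \right)$ design (on the point set $Y\setminus Z$). \item[(b)] $|Y \cap Z| = m^- - \frac{(e^+)^2 - (e^-)^2}{(e^+)^2 + e^-} = \frac{(e^-+1)e^+}{(e^+)^2 + e^-}$. \item[(c)] For every vertex $w$ of $\Gamma$ with $w \notin Y$ and $w \notin Z$, the set $\{y \in Y : y \sim w\}$ contains exactly $e^+$ elements of $Y \cap Z$. \item[(d)] $\Gamma$ contains at most $m^-+1$ Delsarte cocliques. If $\Gamma$ contains exactly $m^-+1$ Delsarte cocliques, then a symmetric $2$-$\left(\frac{(e^+)^2+ e^+e^-+e^+ - (e^-)^2}{(e^+)^2 + e^-}, \frac{(e^-+1)e^+}{(e^+)^2 + e^-}, \frac{-(e^+)^2 + e^+}{(e^+)^2 + e^-}\right)$ design exists, and every vertex of $\Gamma$ lies in exactly $1+\frac{(e^-+1)e^+}{(e^+)^2 + e^-}$ Delsarte cocliques. \item[(e)] The common intersection of any three distinct Delsarte cocliques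 of $\Gamma$ has size $\frac{-(e^+)^2 + e^+}{(e^+)^2 + e^-}$. \item[(f)] If $e^+$ and $e^-$ are coprime and $e^+ > 1$, then $\Gamma$ contains at most two Delsarte cocliques. \end{enumerate}
   Context: A strongly regular graph with parameters $(v,k,\lambda,\mu)$ has $v$ vertices, is $k$-regular, any two adjacent vertices have exactly $\lambda$ common neighbours and any two distinct non-adjacent vertices have exactly $\mu$ common neighbours. Its adjacency matrix has eigenvalues $k$, $e^+$, $e^-$ with $k \ge e^+ \ge 0 > e^-$; $m^-$ denotes the multiplicity of $e^-$. It is primitive if both it and its complement are connected. $u \sim w$ means $u$ and $w$ are adjacent. A coclique is a set of pairwise non-adjacent vertices; a Delsarte coclique is a coclique of size $\frac{ve^-}{e^- - k}$. A $2$-$(\tilde v,\tilde k,\tilde\lambda)$ design is a set $\mathcal{B}$ of $\tilde k$-subsets (blocks) of a $\tilde v$-element point set such that every pair of distinct points lies in exactly $\tilde\lambda$ blocks; it is symmetric if any two distinct blocks meet in the same number of points (equivalently, for a $2$-design with at least two blocks, the number of blocks equals $\tilde v$). *)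

theory Defs
  imports Main "Jordan_Normal_Form.Char_Poly"
begin

text \<open>Simple graphs on the vertex set {0..<v} (natural numbers), given by an
  adjacency relation E (only its restriction to {0..<v} matters).\<close>

definition simple_graph :: "nat \<Rightarrow> (nat \<Rightarrow> nat \<Rightarrow> bool) \<Rightarrow> bool" where
  "simple_graph v E \<longleftrightarrow>
     (\<forall>x<v. \<not> E x x) \<and> (\<forall>x<v. \<forall>y<v. E x y \<longleftrightarrow> E y x)"

definition srg :: "nat \<Rightarrow> (nat \<Rightarrow> nat \<Rightarrow> bool) \<Rightarrow> nat \<Rightarrow> nat \<Rightarrow> nat \<Rightarrow> bool" where
  "srg v E k lam mu \<longleftrightarrow> simple_graph v E \<and>
     (\<forall>x<v. card {y. y < v \<and> E x y} = k) \<and>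
     (\<forall>x<v. \<forall>y<v. x \<noteq> y \<and> E x y \<longrightarrow> card {z. z < v \<and> E x z \<and> E y z} = lam) \<and>
     (\<forall>x<v. \<forall>y<v. x \<noteq> y \<and> \<not> E x y \<longrightarrow> card {z. z < v \<and> E x z \<and> E y z} = mu)"

definition connected_graph :: "nat \<Rightarrow> (nat \<Rightarrow> nat \<Rightarrow> bool) \<Rightarrow> bool" where
  "connected_graph v E \<longleftrightarrow>
     (\<forall>x<v. \<forall>y<v. (\<lambda>a b. a < v \<and> b < v \<and> E a b)\<^sup>*\<^sup>* x y)"

definition complement_graph :: "(nat \<Rightarrow> nat \<Rightarrow> bool) \<Rightarrow> nat \<Rightarrow> nat \<Rightarrow> bool" where
  "complement_graph E = (\<lambda>a b. a \<noteq> b \<and> \<not> E a b)"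

definition primitive_graph :: "nat \<Rightarrow> (nat \<Rightarrow> nat \<Rightarrow> bool) \<Rightarrow> bool" where
  "primitive_graph v E \<longleftrightarrow> connected_graph v E \<and> connected_graph v (complement_graph E)"

definition adj_matrix :: "nat \<Rightarrow> (nat \<Rightarrow> nat \<Rightarrow> bool) \<Rightarrow> real mat" where
  "adj_matrix v E = mat v v (\<lambda>(i, j). if E i j then 1 else 0)"

definition coclique :: "nat \<Rightarrow> (nat \<Rightarrow> nat \<Rightarrow> bool) \<Rightarrow> nat set \<Rightarrow> bool" where
  "coclique v E C \<longleftrightarrow> C \<subseteq> {0..<v} \<and> (\<forall>x\<in>C. \<forall>y\<in>C. \<not> E x y)"

definition delsarte_coclique ::
  "nat \<Rightarrow> (nat \<Rightarrow> nat \<Rightarrow> bool) \<Rightarrow> nat \<Rightarrow> real \<Rightarrow> nat set \<Rightarrow> bool" where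
  "delsarte_coclique v E k em C \<longleftrightarrow>
     coclique v E C \<and> real (card C) = real v * em / (em - real k)"

definition design2 :: "'p set \<Rightarrow> 'p set set \<Rightarrow> real \<Rightarrow> real \<Rightarrow> real \<Rightarrow> bool" where
  "design2 P Bs vt kt lt \<longleftrightarrow> finite P \<and> real (card P) = vt \<and>
     (\<forall>b\<in>Bs. b \<subseteq> P \<and> real (card b) = kt) \<and>
     (\<forall>x\<in>P. \<forall>y\<in>P. x \<noteq> y \<longrightarrow> real (card {b\<in>Bs. x \<in> b \<and> y \<in> b}) = lt)"

definition symmetric_design :: "'p set \<Rightarrow> 'p set set \<Rightarrow> real \<Rightarrow> real \<Rightarrow> real \<Rightarrow> bool" where
  "symmetric_design P Bs vt kt lt \<longleftrightarrow> design2 P Bs vt kt lt \<and> real (card Bs) = vt"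

end

theory Submission
  imports Defs "Jordan_Normal_Form.Schur_Decomposition"
begin

text \<open>A Delsarte coclique \<open>C\<close> attains Hoffman's bound, so every vertex outside \<open>C\<close> has
  exactly \<open>-e\<^sup>-\<close> neighbours in \<open>C\<close>. The traces of \<open>A\<close> and \<open>A\<^sup>2\<close> give the multiplicity
  formula \<open>m\<^sup>- (e\<^sup>- - k) (e\<^sup>- - e\<^sup>+) = v k (1 + e\<^sup>+)\<close>, which turns \<open>v e\<^sup>- = m\<^sup>- (e\<^sup>- - k)\<close>
  into \<open>e\<^sup>- (e\<^sup>- - e\<^sup>+) = k (1 + e\<^sup>+)\<close>. With this identity a second variance computation shows
  that two vertices \<open>x \<noteq> w\<close> outside \<open>C\<close> have exactly \<open>-(e\<^sup>+)\<^sup>2 - e\<^sup>- - e\<^sup>+ [x \<sim> w]\<close>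
  common neighbours in \<open>C\<close>. The rest is double counting. For two Delsarte cocliques \<open>Y\<close>, \<open>Z\<close>
  these numbers make the sets \<open>b\<^sub>z\<close> a symmetric design and fix \<open>|Y \<inter> Z|\<close>; every vertex
  outside \<open>Y \<union> Z\<close> sees \<open>e\<^sup>+\<close> vertices of \<open>Y \<inter> Z\<close>, which fixes the triple intersections.
  The number of Delsarte cocliques through a vertex has variance proportional to \<open>m\<^sup>- + 1 - N\<close>,
  \<open>N\<close> being the number of all Delsarte cocliques, whence the bound; in the extremal case that
  number is constant, and the sets \<open>Y \<inter> Z\<close> are the blocks of a symmetric design on \<open>Y\<close>.
  Finally, for coprime \<open>e\<^sup>+\<close> and \<open>e\<^sup>-\<close> the triple intersection number forces \<open>\<lambda> < 0\<close>.\<close>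

section \<open>Double counting\<close>

definition edge_ind :: "(nat \<Rightarrow> nat \<Rightarrow> bool) \<Rightarrow> nat \<Rightarrow> nat \<Rightarrow> 'a::field" where
  "edge_ind E x y = (if E x y then 1 else 0)"

lemma card_filter_eq_sum_if:
  assumes "finite A"
  shows "of_nat (card {x\<in>A. P x}) = (\<Sum>x\<in>A. if P x then 1 else 0 :: 'a::semiring_1)"
proof -
  have "{x\<in>A. P x} = A \<inter> {x. P x}" by blast
  then show ?thesis using assms by (simp add: sum.If_cases)
qed

lemma edge_ind_idem: "edge_ind E x y * edge_ind E x y = edge_ind E x y"
  unfolding edge_ind_def by simp

lemma card_neighbours_eq_sum:
  "finite A \<Longrightarrow> of_nat (card {y\<in>A. E y z}) = (\<Sum>y\<in>A. edge_ind E y z)"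
  unfolding edge_ind_def by (rule card_filter_eq_sum_if)

lemma card_common_neighbours_eq_sum:
  "finite A \<Longrightarrow> of_nat (card {z\<in>A. E x z \<and> E y z}) = (\<Sum>z\<in>A. edge_ind E x z * edge_ind E y z)"
  by (subst card_filter_eq_sum_if) (auto simp: edge_ind_def intro: sum.cong)

lemma coclique_finite: "coclique v E C \<Longrightarrow> finite C"
  unfolding coclique_def using finite_subset by blast

lemma coclique_less: "coclique v E C \<Longrightarrow> x \<in> C \<Longrightarrow> x < v"
  unfolding coclique_def by auto

lemma coclique_edge_ind: "coclique v E C \<Longrightarrow> x \<in> C \<Longrightarrow> y \<in> C \<Longrightarrow> edge_ind E x y = 0"
  unfolding coclique_def edge_ind_def by auto

lemma sum_atLeastLessThan_remove:
  fixes f :: "nat \<Rightarrow> 'a::comm_monoid_add"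
  assumes "C \<subseteq> {0..<v}" "x < v" "x \<notin> C"
  shows "sum f {0..<v} = sum f ({0..<v} - C - {x}) + sum f C + f x"
proof -
  have "sum f {0..<v} = sum f ({0..<v} - C) + sum f C"
    by (rule sum.subset_diff[OF assms(1)]) simp
  moreover have "sum f ({0..<v} - C) = sum f ({0..<v} - C - {x}) + sum f {x}"
    by (rule sum.subset_diff) (use assms in auto)
  ultimately show ?thesis by (simp add: add.commute add.left_commute)
qed

lemma sum_card_members:
  assumes A: "finite A" and D: "finite D" and sub: "\<And>C. C \<in> D \<Longrightarrow> C \<subseteq> A"
  shows "(\<Sum>x\<in>A. real (card {C\<in>D. x \<in> C})) = (\<Sum>C\<in>D. real (card C))"
proof -
  have "(\<Sum>x\<in>A. real (card {C\<in>D. x \<in> C})) = (\<Sum>x\<in>A. \<Sum>C\<in>D. if x \<in> C then 1 else 0)"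
    using D by (simp add: card_filter_eq_sum_if)
  also have "\<dots> = (\<Sum>C\<in>D. \<Sum>x\<in>A. if x \<in> C then 1 else 0)" by (rule sum.swap)
  also have "\<dots> = (\<Sum>C\<in>D. real (card {x\<in>A. x \<in> C}))"
    using A by (simp add: card_filter_eq_sum_if)
  also have "\<dots> = (\<Sum>C\<in>D. real (card C))"
    using sub by (intro sum.cong refl) (metis (no_types) Collect_mem_eq inf.absorb_iff2 Collect_conj_eq)
  finally show ?thesis .
qed

lemma sum_card_members_square:
  assumes A: "finite A" and D: "finite D" and sub: "\<And>C. C \<in> D \<Longrightarrow> C \<subseteq> A"
  shows "(\<Sum>x\<in>A. real (card {C\<in>D. x \<in> C}) * real (card {C\<in>D. x \<in> C}))
    = (\<Sum>C\<in>D. \<Sum>C'\<in>D. real (card (C \<inter> C')))"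
proof -
  have "(\<Sum>x\<in>A. real (card {C\<in>D. x \<in> C}) * real (card {C\<in>D. x \<in> C}))
      = (\<Sum>x\<in>A. \<Sum>C\<in>D. \<Sum>C'\<in>D. (if x \<in> C then 1 else 0) * (if x \<in> C' then 1 else 0))"
    using D by (simp add: card_filter_eq_sum_if sum_product)
  also have "\<dots> = (\<Sum>C\<in>D. \<Sum>C'\<in>D. \<Sum>x\<in>A. (if x \<in> C then 1 else 0) * (if x \<in> C' then 1 else 0))"
    by (subst sum.swap) (simp add: sum.swap[of _ A])
  also have "\<dots> = (\<Sum>C\<in>D. \<Sum>C'\<in>D. real (card (C \<inter> C')))"
  proof (intro sum.cong refl)
    fix C C' assume "C \<in> D"
    then have "{x\<in>A. x \<in> C \<and> x \<in> C'} = C \<inter> C'" using sub by blast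
    moreover have "(\<Sum>x\<in>A. (if x \<in> C then 1 else 0) * (if x \<in> C' then 1 else 0 :: real))
        = (\<Sum>x\<in>A. if x \<in> C \<and> x \<in> C' then 1 else 0)"
      by (intro sum.cong refl) auto
    ultimately show "(\<Sum>x\<in>A. (if x \<in> C then 1 else 0) * (if x \<in> C' then 1 else 0 :: real)) = real (card (C \<inter> C'))"
      using card_filter_eq_sum_if[OF A, of "\<lambda>x. x \<in> C \<and> x \<in> C'", where 'a=real] by simp
  qed
  finally show ?thesis .
qed

text \<open>Fisher's variance argument for the dual structure: the number of blocks through \<open>y\<close> and a
  second point has mean \<open>t\<close> and variance \<open>0\<close>.\<close>

lemma card_blocks_through_pair:
  fixes P :: "'p set" and Bs :: "'p set set"
  assumes P: "finite P" and Bs: "finite Bs" and sub: "\<And>b. b \<in> Bs \<Longrightarrow> b \<subseteq> P"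
    and block_card: "\<And>b. b \<in> Bs \<Longrightarrow> real (card b) = a"
    and replication: "\<And>x. x \<in> P \<Longrightarrow> real (card {b\<in>Bs. x \<in> b}) = a"
    and inter: "\<And>b b'. b \<in> Bs \<Longrightarrow> b' \<in> Bs \<Longrightarrow> b \<noteq> b' \<Longrightarrow> real (card (b \<inter> b')) = t"
    and params: "t * (real (card P) - 1) = a * (a - 1)"
    and y: "y \<in> P" and y': "y' \<in> P" and yy': "y \<noteq> y'"
  shows "real (card {b\<in>Bs. y \<in> b \<and> y' \<in> b}) = t"
proof -
  define By where "By = {b\<in>Bs. y \<in> b}"
  define u where "u x = real (card {b\<in>By. x \<in> b})" for x
  have By: "finite By" "\<And>b. b \<in> By \<Longrightarrow> b \<subseteq> P" unfolding By_def using Bs sub by auto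
  have card_By: "real (card By) = a" unfolding By_def by (rule replication[OF y])
  have uy: "u y = a" unfolding u_def By_def using replication[OF y] by simp
  have S1: "(\<Sum>x\<in>P. u x) = a * a"
    unfolding u_def using sum_card_members[OF P By] card_By block_card unfolding By_def by simp
  have "(\<Sum>x\<in>P. u x * u x) = (\<Sum>b\<in>By. \<Sum>b'\<in>By. real (card (b \<inter> b')))"
    unfolding u_def by (rule sum_card_members_square[OF P By])
  also have "\<dots> = (\<Sum>b\<in>By. \<Sum>b'\<in>By. t + (if b = b' then a - t else 0))"
  proof (intro sum.cong refl)
    fix b b' assume "b \<in> By" "b' \<in> By"
    then show "real (card (b \<inter> b')) = t + (if b = b' then a - t else 0)"
      using block_card inter unfolding By_def by (cases "b = b'") simp_all
  qed
  also have "\<dots> = a * (a * t + (a - t))" using By(1) card_By by (simp add: sum.distrib)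
  finally have S2: "(\<Sum>x\<in>P. u x * u x) = a * (a * t + (a - t))" .
  have rest: "(\<Sum>x\<in>P. f x) = (\<Sum>x\<in>P - {y}. f x) + f y" for f :: "'p \<Rightarrow> real"
    using sum.remove[OF P y, of f] by (simp add: add.commute)
  have "(\<Sum>x\<in>P - {y}. (u x - t) * (u x - t))
      = (\<Sum>x\<in>P - {y}. u x * u x) - 2 * t * (\<Sum>x\<in>P - {y}. u x) + t * t * real (card (P - {y}))"
    by (simp add: algebra_simps sum.distrib sum_subtractf sum_distrib_left)
  also have "\<dots> = t * (t * (real (card P) - 1) - a * (a - 1))"
  proof -
    have "card P \<ge> 1" using P y by (metis One_nat_def Suc_leI card_gt_0_iff empty_iff)
    then have "real (card (P - {y})) = real (card P) - 1" using P y by (simp add: of_nat_diff)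
    moreover have "(\<Sum>x\<in>P - {y}. u x) = a * a - a" using S1 rest[of u] uy by simp
    moreover have "(\<Sum>x\<in>P - {y}. u x * u x) = a * (a * t + (a - t)) - a * a"
      using S2 rest[of "\<lambda>x. u x * u x"] uy by simp
    ultimately show ?thesis by (Groebner_Basis.algebra)
  qed
  also have "\<dots> = 0" using params by simp
  finally have "\<forall>x\<in>P - {y}. (u x - t) * (u x - t) = 0"
    using sum_nonneg_eq_0_iff[of "P - {y}" "\<lambda>x. (u x - t) * (u x - t)"] P by simp
  then have "u y' = t" using y' yy' by simp
  moreover have "{b\<in>By. y' \<in> b} = {b\<in>Bs. y \<in> b \<and> y' \<in> b}" unfolding By_def by blast
  ultimately show ?thesis unfolding u_def by simp
qed

section \<open>Adjacency matrices and traces\<close>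

definition adjacency_mat :: "nat \<Rightarrow> (nat \<Rightarrow> nat \<Rightarrow> bool) \<Rightarrow> 'a::field mat" where
  "adjacency_mat v E = mat v v (\<lambda>(i, j). edge_ind E i j)"

lemma adj_matrix_eq_adjacency_mat: "adj_matrix v E = adjacency_mat v E"
  unfolding adj_matrix_def adjacency_mat_def edge_ind_def by simp

lemma adjacency_mat_carrier: "adjacency_mat v E \<in> carrier_mat v v"
  unfolding adjacency_mat_def by simp

lemma map_mat_complex_of_real_adjacency_mat:
  "map_mat complex_of_real (adjacency_mat v E) = adjacency_mat v E"
  by (rule eq_matI) (auto simp: adjacency_mat_def edge_ind_def)

definition mat_trace :: "'a::comm_ring_1 mat \<Rightarrow> 'a" where
  "mat_trace M = (\<Sum>i\<in>{0..<dim_row M}. M $$ (i,i))"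

lemma mat_trace_mult_comm:
  assumes "A \<in> carrier_mat n n" "B \<in> carrier_mat n n"
  shows "mat_trace (A * B) = mat_trace (B * A)"
proof -
  have "mat_trace (A * B) = (\<Sum>i\<in>{0..<n}. \<Sum>j\<in>{0..<n}. A $$ (i,j) * B $$ (j,i))"
    unfolding mat_trace_def using assms by (simp add: scalar_prod_def)
  also have "\<dots> = (\<Sum>j\<in>{0..<n}. \<Sum>i\<in>{0..<n}. A $$ (i,j) * B $$ (j,i))" by (rule sum.swap)
  also have "\<dots> = mat_trace (B * A)"
    unfolding mat_trace_def using assms by (simp add: scalar_prod_def mult.commute)
  finally show ?thesis .
qed

lemma mat_trace_similar:
  assumes A: "A \<in> carrier_mat n n" and sim: "similar_mat_wit A B P Q"
  shows "mat_trace A = mat_trace B"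
proof -
  note d = similar_mat_witD2[OF A sim]
  have "mat_trace A = mat_trace ((P * B) * Q)" using d by simp
  also have "\<dots> = mat_trace (Q * (P * B))" by (rule mat_trace_mult_comm) (use d in auto)
  also have "Q * (P * B) = (Q * P) * B" using d by (metis assoc_mult_mat)
  also have "\<dots> = B" using d by simp
  finally show ?thesis .
qed

lemma mat_trace_square_upper_triangular:
  assumes B: "B \<in> carrier_mat n n" and ut: "upper_triangular B"
  shows "mat_trace (B * B) = (\<Sum>i\<in>{0..<n}. B $$ (i,i) * B $$ (i,i))"
proof -
  have off_diag: "B $$ (i,j) * B $$ (j,i) = 0" if "i < n" "j < n" "i \<noteq> j" for i j
    using upper_triangularD[OF ut] B that by (cases "i < j") auto
  have "mat_trace (B * B) = (\<Sum>i\<in>{0..<n}. \<Sum>j\<in>{0..<n}. B $$ (i,j) * B $$ (j,i))"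
    unfolding mat_trace_def using B by (simp add: scalar_prod_def)
  also have "\<dots> = (\<Sum>i\<in>{0..<n}. \<Sum>j\<in>{0..<n}. if j = i then B $$ (i,i) * B $$ (i,i) else 0)"
    using off_diag by (intro sum.cong refl) auto
  also have "\<dots> = (\<Sum>i\<in>{0..<n}. B $$ (i,i) * B $$ (i,i))" by (simp add: sum.delta')
  finally show ?thesis .
qed

lemma order_prod_linear_factors:
  fixes x :: "'a::field"
  shows "Polynomial.order x (\<Prod>a\<leftarrow>es. [:-a, 1:]) = count_list es x"
proof (induct es)
  case Nil
  then show ?case by (simp add: order_0I)
next
  case (Cons a es)
  have "(\<Prod>a\<leftarrow>es. [:-a, 1:]) \<noteq> (0 :: 'a poly)"
    by (subst prod_list_zero_iff) auto
  then have nz: "[:-a, 1:] * (\<Prod>a\<leftarrow>es. [:-a, 1:]) \<noteq> (0 :: 'a poly)"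
    by (simp only: mult_eq_0_iff) simp
  have "Polynomial.order x [:-a, 1:] = (if a = x then 1 else 0)"
    using order_power_n_n[of x 1] by (auto simp: order_0I)
  then show ?case using order_mult[OF nz] Cons by simp
qed

lemma sum_list_quadratic_count:
  fixes es :: "'a::comm_ring_1 list"
  assumes "\<forall>a\<in>set es. a = p \<or> a = q \<or> a = t"
  shows "sum_list (map (\<lambda>a. (a - p) * (a - q)) es) = of_nat (count_list es t) * ((t - p) * (t - q))"
  using assms by (induct es) (auto simp: algebra_simps)

lemma sum_list_quadratic_expand:
  fixes es :: "'a::comm_ring_1 list"
  shows "sum_list (map (\<lambda>a. (a - p) * (a - q)) es)
    = sum_list (map (\<lambda>a. a * a) es) - (p + q) * sum_list es + of_nat (length es) * (p * q)"
proof (induct es)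
  case (Cons a es)
  then show ?case by (simp add: algebra_simps)
qed simp

interpretation of_real_poly: map_poly_inj_idom_divide_hom complex_of_real ..

lemma count_list_eq_order_char_poly:
  fixes es :: "complex list"
  assumes es: "char_poly (adjacency_mat v E) = (\<Prod>a\<leftarrow>es. [:-a, 1:])"
  shows "count_list es (of_real s) = Polynomial.order s (char_poly (adj_matrix v E))"
proof -
  have "count_list es (of_real s) = Polynomial.order (of_real s) (char_poly (adjacency_mat v E :: complex mat))"
    unfolding es by (rule order_prod_linear_factors[symmetric])
  also have "char_poly (adjacency_mat v E :: complex mat) = map_poly of_real (char_poly (adj_matrix v E))"
    unfolding adj_matrix_eq_adjacency_mat map_mat_complex_of_real_adjacency_mat[symmetric]
    by (rule of_real_hom.char_poly_hom[OF adjacency_mat_carrier])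
  also have "Polynomial.order (of_real s) \<dots> = Polynomial.order s (char_poly (adj_matrix v E))"
    by (rule of_real_poly.order_hom)
  finally show ?thesis .
qed

section \<open>Strongly regular graphs\<close>

locale strongly_regular_graph =
  fixes v :: nat and E :: "nat \<Rightarrow> nat \<Rightarrow> bool" and k lam mu :: nat
  assumes srg: "srg v E k lam mu"
begin

lemma srg_irrefl: "x < v \<Longrightarrow> \<not> E x x"
  using srg unfolding srg_def simple_graph_def by blast

lemma srg_sym: "x < v \<Longrightarrow> y < v \<Longrightarrow> E x y \<longleftrightarrow> E y x"
  using srg unfolding srg_def simple_graph_def by blast

lemma edge_ind_sym: "x < v \<Longrightarrow> y < v \<Longrightarrow> edge_ind E x y = edge_ind E y x"
  unfolding edge_ind_def using srg_sym by simp

lemma edge_ind_irrefl: "x < v \<Longrightarrow> edge_ind E x x = 0"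
  unfolding edge_ind_def using srg_irrefl by simp

lemma srg_sum_edge_ind:
  assumes "x < v"
  shows "(\<Sum>y\<in>{0..<v}. edge_ind E x y) = (of_nat k :: 'a::field)"
proof -
  have "{y. y < v \<and> E x y} = {y\<in>{0..<v}. E x y}" by auto
  then have "card {y\<in>{0..<v}. E x y} = k"
    using srg assms unfolding srg_def by simp
  then show ?thesis
    unfolding edge_ind_def by (metis card_filter_eq_sum_if finite_atLeastLessThan)
qed

lemma srg_sum_edge_ind':
  assumes "x < v"
  shows "(\<Sum>y\<in>{0..<v}. edge_ind E y x) = (of_nat k :: 'a::field)"
proof -
  have "(\<Sum>y\<in>{0..<v}. edge_ind E y x) = (\<Sum>y\<in>{0..<v}. (edge_ind E x y :: 'a))"
    using edge_ind_sym assms by (intro sum.cong) auto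
  then show ?thesis using srg_sum_edge_ind[OF assms] by simp
qed

lemma srg_adjacency_square:
  assumes x: "x < v" and y: "y < v"
  shows "(\<Sum>z\<in>{0..<v}. edge_ind E x z * edge_ind E y z) = of_nat mu + (of_nat lam - of_nat mu) * edge_ind E x y
     + (if x = y then of_nat k - of_nat mu else (0 :: 'a::field))"
proof (cases "x = y")
  case True
  then show ?thesis
    using srg_sum_edge_ind[OF x, where 'a='a] edge_ind_irrefl[OF x, where 'a='a] by (simp add: edge_ind_idem)
next
  case False
  have "card {z. z < v \<and> E x z \<and> E y z} = (if E x y then lam else mu)"
    using srg x y False unfolding srg_def by simp
  moreover have "{z. z < v \<and> E x z \<and> E y z} = {z\<in>{0..<v}. E x z \<and> E y z}" by auto
  ultimately have "card {z\<in>{0..<v}. E x z \<and> E y z} = (if E x y then lam else mu)" by (simp only:)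
  then have "(\<Sum>z\<in>{0..<v}. edge_ind E x z * edge_ind E y z) = (if E x y then of_nat lam else (of_nat mu :: 'a))"
    using card_common_neighbours_eq_sum[of "{0..<v}" E x y, where 'a='a] by (cases "E x y") simp_all
  then show ?thesis using False by (simp add: edge_ind_def)
qed

lemma srg_adjacency_square':
  assumes x: "x < v" and y: "y < v"
  shows "(\<Sum>z\<in>{0..<v}. edge_ind E z x * edge_ind E z y) = of_nat mu + (of_nat lam - of_nat mu) * edge_ind E x y
     + (if x = y then of_nat k - of_nat mu else (0 :: 'a::field))"
proof -
  have "(\<Sum>z\<in>{0..<v}. edge_ind E z x * edge_ind E z y) = (\<Sum>z\<in>{0..<v}. (edge_ind E x z * edge_ind E y z :: 'a))"
    by (intro sum.cong refl) (metis atLeastLessThan_iff edge_ind_sym x y)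
  then show ?thesis using srg_adjacency_square[OF x y] by simp
qed

lemma srg_sum_adjacency_mult:
  fixes x :: "nat \<Rightarrow> 'a::field"
  shows "(\<Sum>i\<in>{0..<v}. \<Sum>j\<in>{0..<v}. edge_ind E i j * x j) = of_nat k * (\<Sum>j\<in>{0..<v}. x j)"
proof -
  have "(\<Sum>i\<in>{0..<v}. \<Sum>j\<in>{0..<v}. edge_ind E i j * x j) = (\<Sum>j\<in>{0..<v}. (\<Sum>i\<in>{0..<v}. edge_ind E i j) * x j)"
    by (subst sum.swap) (simp add: sum_distrib_right)
  also have "\<dots> = (\<Sum>j\<in>{0..<v}. of_nat k * x j)" by (intro sum.cong refl) (simp add: srg_sum_edge_ind')
  finally show ?thesis by (simp add: sum_distrib_left)
qed

lemma srg_adjacency_square_mult: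
  fixes x :: "nat \<Rightarrow> 'a::field"
  assumes i: "i < v"
  shows "(\<Sum>j\<in>{0..<v}. edge_ind E i j * (\<Sum>l\<in>{0..<v}. edge_ind E j l * x l))
    = of_nat mu * (\<Sum>l\<in>{0..<v}. x l) + (of_nat lam - of_nat mu) * (\<Sum>l\<in>{0..<v}. edge_ind E i l * x l)
      + (of_nat k - of_nat mu) * x i"
proof -
  have "(\<Sum>j\<in>{0..<v}. edge_ind E i j * (\<Sum>l\<in>{0..<v}. edge_ind E j l * x l))
      = (\<Sum>j\<in>{0..<v}. \<Sum>l\<in>{0..<v}. edge_ind E i j * edge_ind E l j * x l)"
  proof (rule sum.cong[OF refl])
    fix j assume j: "j \<in> {0..<v}"
    have "edge_ind E i j * (\<Sum>l\<in>{0..<v}. edge_ind E j l * x l) = (\<Sum>l\<in>{0..<v}. edge_ind E i j * edge_ind E j l * x l)"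
      by (simp add: sum_distrib_left algebra_simps)
    also have "\<dots> = (\<Sum>l\<in>{0..<v}. edge_ind E i j * edge_ind E l j * x l)"
      using edge_ind_sym j by (intro sum.cong) auto
    finally show "edge_ind E i j * (\<Sum>l\<in>{0..<v}. edge_ind E j l * x l) = (\<Sum>l\<in>{0..<v}. edge_ind E i j * edge_ind E l j * x l)" .
  qed
  also have "\<dots> = (\<Sum>l\<in>{0..<v}. (\<Sum>j\<in>{0..<v}. edge_ind E i j * edge_ind E l j) * x l)"
    by (subst sum.swap) (simp add: sum_distrib_right)
  also have "\<dots> = (\<Sum>l\<in>{0..<v}. (of_nat mu + (of_nat lam - of_nat mu) * edge_ind E i l
       + (if i = l then of_nat k - of_nat mu else 0)) * x l)"
    by (intro sum.cong refl) (simp add: srg_adjacency_square[OF i])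
  also have "\<dots> = (\<Sum>l\<in>{0..<v}. of_nat mu * x l + (of_nat lam - of_nat mu) * (edge_ind E i l * x l)
       + (if i = l then (of_nat k - of_nat mu) * x l else 0))"
    by (intro sum.cong refl) (simp add: algebra_simps)
  also have "\<dots> = of_nat mu * (\<Sum>l\<in>{0..<v}. x l) + (of_nat lam - of_nat mu) * (\<Sum>l\<in>{0..<v}. edge_ind E i l * x l)
       + (of_nat k - of_nat mu) * x i"
    using i by (simp add: sum.distrib sum_distrib_left sum.delta)
  finally show ?thesis .
qed

lemma srg_eigenvalue_cases:
  assumes ev: "eigenvalue (adjacency_mat v E :: 'a::field mat) a"
  shows "a = of_nat k \<or> a * a = (of_nat lam - of_nat mu) * a + (of_nat k - of_nat mu)"
proof -
  have dr: "dim_row (adjacency_mat v E :: 'a mat) = v" by (simp add: adjacency_mat_def)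
  obtain x where x: "x \<in> carrier_vec v" "x \<noteq> 0\<^sub>v v" "(adjacency_mat v E :: 'a mat) *\<^sub>v x = a \<cdot>\<^sub>v x"
    using ev unfolding eigenvalue_def eigenvector_def dr by blast
  have row: "(\<Sum>j\<in>{0..<v}. edge_ind E i j * x$j) = a * x$i" if i: "i < v" for i
  proof -
    have "((adjacency_mat v E :: 'a mat) *\<^sub>v x) $ i = (a \<cdot>\<^sub>v x) $ i" using x(3) by simp
    then show ?thesis using i x(1) by (simp add: adjacency_mat_def scalar_prod_def)
  qed
  define S where "S = (\<Sum>i\<in>{0..<v}. x$i)"
  have "a * S = of_nat k * S"
    using srg_sum_adjacency_mult[of "\<lambda>j. x$j"] row unfolding S_def by (simp add: sum_distrib_left)
  moreover have square: "a * a * x$i = of_nat mu * S + (of_nat lam - of_nat mu) * a * x$i + (of_nat k - of_nat mu) * x$i"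
    if i: "i < v" for i
  proof -
    have "a * a * x$i = a * (\<Sum>j\<in>{0..<v}. edge_ind E i j * x$j)" using row[OF i] by simp
    also have "\<dots> = (\<Sum>j\<in>{0..<v}. edge_ind E i j * (a * x$j))"
      by (simp add: sum_distrib_left algebra_simps)
    also have "\<dots> = (\<Sum>j\<in>{0..<v}. edge_ind E i j * (\<Sum>l\<in>{0..<v}. edge_ind E j l * x$l))" using row by simp
    finally show ?thesis using srg_adjacency_square_mult[OF i, of "\<lambda>l. x$l"] row[OF i] unfolding S_def by simp
  qed
  moreover obtain i where i: "i < v" "x$i \<noteq> 0"
    using x(1,2) by (metis carrier_vecD eq_vecI index_zero_vec(1) index_zero_vec(2))
  ultimately show ?thesis
  proof (cases "a = of_nat k")
    case False
    with \<open>a * S = of_nat k * S\<close> have "S = 0" by simp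
    with square[OF i(1)] have "(a * a - ((of_nat lam - of_nat mu) * a + (of_nat k - of_nat mu))) * x$i = 0"
      by (simp add: algebra_simps)
    with i(2) show ?thesis by simp
  qed simp
qed

lemma srg_eigenvalue_params:
  assumes r: "eigenvalue (adj_matrix v E) r" and s: "eigenvalue (adj_matrix v E) s"
    and rk: "r \<noteq> real k" and sk: "s \<noteq> real k" and rs: "r \<noteq> s"
  shows "r + s = real lam - real mu" "r * s = real mu - real k"
proof -
  have r2: "r * r = (real lam - real mu) * r + (real k - real mu)"
    using srg_eigenvalue_cases r rk unfolding adj_matrix_eq_adjacency_mat by fastforce
  have s2: "s * s = (real lam - real mu) * s + (real k - real mu)"
    using srg_eigenvalue_cases s sk unfolding adj_matrix_eq_adjacency_mat by fastforce
  have "(r - s) * (r + s) = (r - s) * (real lam - real mu)" using r2 s2 by (simp add: algebra_simps)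
  with rs show rs_sum: "r + s = real lam - real mu" by simp
  then have "(real lam - real mu) * r = (r + s) * r" by simp
  with r2 show "r * s = real mu - real k" by (simp add: algebra_simps)
qed

text \<open>Both sums are traces, of \<open>A\<close> and of \<open>A\<^sup>2\<close>, read off a Schur triangularisation.\<close>

lemma srg_eigenvalue_sums:
  fixes es :: "complex list"
  assumes es: "char_poly (adjacency_mat v E) = (\<Prod>a\<leftarrow>es. [:-a, 1:])"
  shows "sum_list es = 0" "sum_list (map (\<lambda>a. a * a) es) = of_nat v * of_nat k"
proof -
  define A :: "complex mat" where "A = adjacency_mat v E"
  have A: "A \<in> carrier_mat v v" unfolding A_def by (rule adjacency_mat_carrier)
  obtain B P Q where "schur_decomposition A es = (B, P, Q)" by (cases "schur_decomposition A es") auto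
  from schur_decomposition[OF A es[folded A_def] this]
  have sim: "similar_mat_wit A B P Q" and ut: "upper_triangular B" and dg: "diag_mat B = es" by auto
  have B: "B \<in> carrier_mat v v" using similar_mat_witD2[OF A sim] by auto
  have "length (diag_mat B) = v" using B unfolding diag_mat_def by simp
  then have len: "length es = v" using dg by simp
  have Bd: "B $$ (i,i) = es ! i" if "i < v" for i
    using dg that B unfolding diag_mat_def by auto
  have "sum_list es = (\<Sum>i\<in>{0..<v}. es ! i)" by (simp add: sum_list_sum_nth len atLeast0LessThan)
  also have "\<dots> = mat_trace B" unfolding mat_trace_def using B Bd by simp
  also have "\<dots> = mat_trace A" using mat_trace_similar[OF A sim] by simp
  also have "\<dots> = 0"
    unfolding mat_trace_def A_def adjacency_mat_def by (auto intro!: sum.neutral simp: edge_ind_irrefl)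
  finally show "sum_list es = 0" .
  have "sum_list (map (\<lambda>a. a * a) es) = (\<Sum>i\<in>{0..<v}. B $$ (i,i) * B $$ (i,i))"
    by (simp add: sum_list_sum_nth len atLeast0LessThan Bd)
  also have "\<dots> = mat_trace (B * B)" using mat_trace_square_upper_triangular[OF B ut] by simp
  also have "\<dots> = mat_trace (A * A)"
    using similar_mat_wit_pow[OF sim, of 2] mat_trace_similar[of "A * A" v] A B
    by (simp add: numeral_2_eq_2)
  also have "\<dots> = (\<Sum>i\<in>{0..<v}. \<Sum>j\<in>{0..<v}. edge_ind E i j * edge_ind E i j)"
    unfolding mat_trace_def A_def adjacency_mat_def
    by (simp add: scalar_prod_def) (metis (no_types, lifting) atLeastLessThan_iff edge_ind_sym sum.cong)
  also have "\<dots> = of_nat v * of_nat k"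
    by (simp add: edge_ind_idem srg_sum_edge_ind)
  finally show "sum_list (map (\<lambda>a. a * a) es) = of_nat v * of_nat k" .
qed

lemma srg_char_poly_roots:
  fixes es :: "complex list"
  assumes rs_sum: "r + s = real lam - real mu" and rs_prod: "r * s = real mu - real k"
    and es: "char_poly (adjacency_mat v E) = (\<Prod>a\<leftarrow>es. [:-a, 1:])" and a: "a \<in> set es"
  shows "a = of_real (real k) \<or> a = of_real r \<or> a = of_real s"
proof -
  have "Polynomial.order a (char_poly (adjacency_mat v E)) \<noteq> 0"
    using a unfolding es by (simp add: order_prod_linear_factors count_list_0_iff)
  then have "eigenvalue (adjacency_mat v E) a"
    using eigenvalue_root_char_poly[OF adjacency_mat_carrier] order_root by blast
  then have "a = of_nat k \<or> a * a = (of_nat lam - of_nat mu) * a + (of_nat k - of_nat mu)"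
    by (rule srg_eigenvalue_cases)
  moreover have "complex_of_nat lam - of_nat mu = of_real (r + s)"
    using rs_sum by (metis of_real_diff of_real_of_nat_eq)
  moreover have "complex_of_nat k - of_nat mu = - of_real (r * s)"
    using rs_prod by (metis minus_diff_eq of_real_diff of_real_minus of_real_of_nat_eq)
  ultimately have "a = of_nat k \<or> (a - of_real r) * (a - of_real s) = 0"
    by (auto simp: algebra_simps)
  then show ?thesis by auto
qed

lemma srg_multiplicity:
  assumes rs_sum: "r + s = real lam - real mu" and rs_prod: "r * s = real mu - real k"
  shows "real (Polynomial.order s (char_poly (adj_matrix v E))) * ((s - k) * (s - r))
    = real v * real k * (1 + r)"
proof -
  obtain es :: "complex list" where es: "char_poly (adjacency_mat v E) = (\<Prod>a\<leftarrow>es. [:-a, 1:])"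
    and len: "length es = v"
    using char_poly_factorized[OF adjacency_mat_carrier] by blast
  define kk rr ss where "kk = complex_of_real (real k)" and "rr = complex_of_real r"
    and "ss = complex_of_real s"
  have "of_nat (count_list es ss) * ((ss - kk) * (ss - rr))
      = sum_list (map (\<lambda>a. (a - kk) * (a - rr)) es)"
    using srg_char_poly_roots[OF rs_sum rs_prod es] unfolding kk_def rr_def ss_def
    by (intro sum_list_quadratic_count[symmetric]) blast
  also have "\<dots> = sum_list (map (\<lambda>a. a * a) es) - (kk + rr) * sum_list es + of_nat (length es) * (kk * rr)"
    by (rule sum_list_quadratic_expand)
  also have "\<dots> = of_nat v * of_nat k * (1 + rr)"
    unfolding srg_eigenvalue_sums[OF es] len kk_def by (simp add: algebra_simps)
  finally have "complex_of_real (real (count_list es ss) * ((s - real k) * (s - r)))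
      = complex_of_real (real v * real k * (1 + r))"
    unfolding kk_def rr_def ss_def by simp
  then have "real (count_list es ss) * ((s - real k) * (s - r)) = real v * real k * (1 + r)"
    by (simp only: of_real_eq_iff)
  then show ?thesis using count_list_eq_order_char_poly[OF es] unfolding ss_def by simp
qed

abbreviation adj :: "nat \<Rightarrow> nat \<Rightarrow> real" where
  "adj \<equiv> edge_ind E"

text \<open>Count the walks of length two starting at a fixed vertex.\<close>

lemma srg_parameter_identity:
  assumes v: "0 < v"
  shows "real k * real k = real k + real lam * real k + real mu * (real v - 1 - real k)"
proof -
  have "(\<Sum>z\<in>{0..<v}. \<Sum>y\<in>{0..<v}. adj 0 y * adj y z) = (\<Sum>y\<in>{0..<v}. \<Sum>z\<in>{0..<v}. adj 0 y * adj y z)"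
    by (rule sum.swap)
  also have "\<dots> = (\<Sum>y\<in>{0..<v}. adj 0 y * real k)"
    by (intro sum.cong refl) (simp add: sum_distrib_left[symmetric] srg_sum_edge_ind)
  also have "\<dots> = (\<Sum>y\<in>{0..<v}. adj 0 y) * real k" by (simp add: sum_distrib_right)
  also have "(\<Sum>y\<in>{0..<v}. adj 0 y) = real k" using srg_sum_edge_ind[OF v] by simp
  finally have walks: "(\<Sum>z\<in>{0..<v}. \<Sum>y\<in>{0..<v}. adj 0 y * adj y z) = real k * real k" .
  have "(\<Sum>z\<in>{0..<v}. \<Sum>y\<in>{0..<v}. adj 0 y * adj y z) = (\<Sum>z\<in>{0..<v}. \<Sum>y\<in>{0..<v}. adj y 0 * adj y z)"
    by (intro sum.cong refl) (metis atLeastLessThan_iff edge_ind_sym v)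
  also have "\<dots> = (\<Sum>z\<in>{0..<v}. real mu + (real lam - real mu) * adj 0 z + (if 0 = z then real k - real mu else 0))"
    by (intro sum.cong refl) (simp add: srg_adjacency_square' v)
  also have "\<dots> = real v * real mu + (real lam - real mu) * real k + (real k - real mu)"
    using v by (simp add: sum.distrib sum_distrib_left[symmetric] srg_sum_edge_ind sum.delta)
  finally show ?thesis using walks by (simp add: algebra_simps)
qed

lemma coclique_sum_degrees:
  assumes C: "coclique v E C"
  shows "(\<Sum>x\<in>{0..<v}. \<Sum>y\<in>C. adj x y) = real (card C) * real k"
proof -
  have "(\<Sum>x\<in>{0..<v}. \<Sum>y\<in>C. adj x y) = (\<Sum>y\<in>C. \<Sum>x\<in>{0..<v}. adj x y)" by (rule sum.swap)
  also have "\<dots> = (\<Sum>y\<in>C. real k)"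
    by (intro sum.cong refl) (simp add: srg_sum_edge_ind' coclique_less[OF C])
  finally show ?thesis by simp
qed

lemma coclique_sum_degrees_square:
  assumes C: "coclique v E C"
  shows "(\<Sum>x\<in>{0..<v}. (\<Sum>y\<in>C. adj x y) * (\<Sum>y\<in>C. adj x y))
    = real (card C) * (real (card C) * real mu + real k - real mu)"
proof -
  have fC: "finite C" by (rule coclique_finite[OF C])
  have "(\<Sum>x\<in>{0..<v}. (\<Sum>y\<in>C. adj x y) * (\<Sum>y\<in>C. adj x y))
      = (\<Sum>x\<in>{0..<v}. \<Sum>y\<in>C. \<Sum>y'\<in>C. adj x y * adj x y')"
    by (simp add: sum_product)
  also have "\<dots> = (\<Sum>y\<in>C. \<Sum>x\<in>{0..<v}. \<Sum>y'\<in>C. adj x y * adj x y')" by (rule sum.swap)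
  also have "\<dots> = (\<Sum>y\<in>C. \<Sum>y'\<in>C. \<Sum>x\<in>{0..<v}. adj x y * adj x y')" by (intro sum.cong refl sum.swap)
  also have "\<dots> = (\<Sum>y\<in>C. \<Sum>y'\<in>C. real mu + (if y = y' then real k - real mu else 0))"
    by (intro sum.cong refl) (simp add: srg_adjacency_square' coclique_less[OF C] coclique_edge_ind[OF C])
  also have "\<dots> = (\<Sum>y\<in>C. real (card C) * real mu + (real k - real mu))"
    by (intro sum.cong refl) (simp add: sum.distrib fC)
  finally show ?thesis by (simp add: algebra_simps)
qed

end

section \<open>Delsarte cocliques\<close>

text \<open>\<open>r\<close> and \<open>s\<close> play the roles of \<open>e\<^sup>+\<close> and \<open>e\<^sup>-\<close>. The assumption \<open>delsarte_condition\<close> is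
  \<open>v e\<^sup>- = m\<^sup>- (e\<^sup>- - k)\<close> after substituting the multiplicity formula
  \<open>m\<^sup>- (e\<^sup>- - k) (e\<^sup>- - e\<^sup>+) = v k (1 + e\<^sup>+)\<close> of \<open>srg_multiplicity\<close>.\<close>

locale srg_delsarte = strongly_regular_graph +
  fixes r s :: real
  assumes rs_sum: "r + s = real lam - real mu"
    and rs_prod: "r * s = real mu - real k"
    and delsarte_condition: "s * (s - r) = real k * (1 + r)"
    and r_pos: "0 < r" and r_less_k: "r < real k" and s_neg: "s < 0" and v_pos: "0 < v"
begin

abbreviation delsarte :: "nat set \<Rightarrow> bool" where
  "delsarte \<equiv> delsarte_coclique v E k s"

lemma s_minus_k_nonzero: "s - real k \<noteq> 0"
  using s_neg r_less_k r_pos by linarith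

lemma delsarte_coclique: "delsarte C \<Longrightarrow> coclique v E C"
  unfolding delsarte_coclique_def by simp

lemma delsarte_card: "delsarte C \<Longrightarrow> real (card C) * (s - real k) = real v * s"
  unfolding delsarte_coclique_def using s_minus_k_nonzero by (simp add: field_simps)

lemma delsarte_finite: "delsarte C \<Longrightarrow> finite C"
  using coclique_finite delsarte_coclique by blast

lemma delsarte_less: "delsarte C \<Longrightarrow> x \<in> C \<Longrightarrow> x < v"
  using coclique_less delsarte_coclique by blast

lemma delsarte_adj: "delsarte C \<Longrightarrow> x \<in> C \<Longrightarrow> y \<in> C \<Longrightarrow> adj x y = 0"
  using coclique_edge_ind delsarte_coclique by blast

lemma mu_v: "real mu * real v = (real k - r) * (real k - s)"
proof -
  have "(real k - r) * (real k - s) = real k * real k - real k * (r + s) + r * s" by (simp add: algebra_simps)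
  also have "\<dots> = real k * real k - real k * (real lam - real mu) + (real mu - real k)"
    using rs_sum rs_prod by simp
  finally show ?thesis using srg_parameter_identity[OF v_pos] by (simp add: algebra_simps)
qed

lemma mu_pos: "real mu > 0"
proof -
  have "(real k - r) * (real k - s) > 0" using r_less_k s_neg by simp
  then have "real mu * real v > 0" using mu_v by simp
  then show ?thesis using v_pos by (simp add: zero_less_mult_iff)
qed

lemma delsarte_card_mu: "delsarte C \<Longrightarrow> real (card C) * real mu = - s * (real k - r)"
proof -
  assume "delsarte C"
  then have "(real (card C) * real mu + s * (real k - r)) * (s - real k) = 0"
    using delsarte_card[of C] mu_v by (Groebner_Basis.algebra)
  then show ?thesis using s_minus_k_nonzero by simp
qed

lemma delsarte_card_formula:
  assumes "delsarte C"
  shows "real (card C) * (r * r + s) = r * r + r * s + r - s * s"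
proof -
  have "s * (real (card C) * (r * r + s) - (r * r + r * s + r - s * s)) = 0"
    using delsarte_card_mu[OF assms] rs_prod delsarte_condition by (Groebner_Basis.algebra)
  then show ?thesis using s_neg by simp
qed

lemma delsarte_card_eq: "delsarte Y \<Longrightarrow> delsarte Z \<Longrightarrow> card Y = card Z"
  using delsarte_card s_minus_k_nonzero by (metis mult_cancel_right of_nat_eq_iff)

text \<open>Equality in Hoffman's bound: the number of neighbours in \<open>C\<close> has zero variance over the
  vertices outside \<open>C\<close>.\<close>

lemma delsarte_neighbours_outside:
  assumes C: "delsarte C" and x: "x < v" "x \<notin> C"
  shows "(\<Sum>y\<in>C. adj x y) = - s"
proof -
  define n where "n x = (\<Sum>y\<in>C. adj x y)" for x
  define c where "c = real (card C)"
  have Cc: "coclique v E C" using C by (rule delsarte_coclique)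
  have sub: "C \<subseteq> {0..<v}" using delsarte_less[OF C] by auto
  have n0: "n x = 0" if "x \<in> C" for x unfolding n_def by (rule sum.neutral) (simp add: delsarte_adj[OF C that])
  have S1: "(\<Sum>x\<in>{0..<v}. n x) = c * real k"
    unfolding n_def c_def by (rule coclique_sum_degrees[OF Cc])
  have S2: "(\<Sum>x\<in>{0..<v}. n x * n x) = c * (c * real mu + real k - real mu)"
    unfolding n_def c_def by (rule coclique_sum_degrees_square[OF Cc])
  have "(\<Sum>x\<in>{0..<v}. (n x + s) * (n x + s))
      = (\<Sum>x\<in>{0..<v}. n x * n x) + 2 * s * (\<Sum>x\<in>{0..<v}. n x) + real v * (s * s)"
    by (simp add: algebra_simps sum.distrib sum_distrib_left)
  moreover have "(\<Sum>x\<in>{0..<v}. (n x + s) * (n x + s))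
      = (\<Sum>x\<in>{0..<v} - C. (n x + s) * (n x + s)) + (\<Sum>x\<in>C. (n x + s) * (n x + s))"
    by (rule sum.subset_diff[OF sub], simp)
  moreover have "(\<Sum>x\<in>C. (n x + s) * (n x + s)) = c * (s * s)" unfolding c_def by (simp add: n0)
  ultimately have "(\<Sum>x\<in>{0..<v} - C. (n x + s) * (n x + s))
      = c * (c * real mu + real k - real mu) + 2 * s * (c * real k) + (real v - c) * (s * s)"
    unfolding S1 S2 by (simp add: algebra_simps)
  also have "\<dots> = 0"
    using rs_prod delsarte_card_mu[OF C] delsarte_card[OF C] unfolding c_def by (Groebner_Basis.algebra)
  finally have "\<forall>x\<in>{0..<v} - C. (n x + s) * (n x + s) = 0"
    using sum_nonneg_eq_0_iff[of "{0..<v} - C" "\<lambda>x. (n x + s) * (n x + s)"] by simp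
  then have "(n x + s) * (n x + s) = 0" using x by simp
  then show ?thesis unfolding n_def by simp
qed

lemma delsarte_neighbours_outside':
  assumes C: "delsarte C" and x: "x < v" "x \<notin> C"
  shows "(\<Sum>y\<in>C. adj y x) = - s"
proof -
  have "(\<Sum>y\<in>C. adj y x) = (\<Sum>y\<in>C. adj x y)"
    using delsarte_less[OF C] x(1) by (intro sum.cong refl) (metis edge_ind_sym)
  then show ?thesis using delsarte_neighbours_outside[OF assms] by simp
qed

lemma card_delsarte_neighbours:
  assumes "delsarte C" "x < v" "x \<notin> C"
  shows "real (card {y\<in>C. E y x}) = - s"
  using delsarte_neighbours_outside'[OF assms] card_neighbours_eq_sum[OF delsarte_finite[OF assms(1)], of E x, where 'a=real]
  by simp

text \<open>The first two moments of \<open>w \<mapsto> |N(x) \<inter> N(w) \<inter> C|\<close> over the vertices \<open>w \<notin> C \<union> {x}\<close>,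
  for a Delsarte coclique \<open>C\<close> and \<open>x \<notin> C\<close>.\<close>

context
  fixes C x
  assumes C: "delsarte C" and x: "x < v" "x \<notin> C"
begin

lemma sum_remaining_split: "sum f {0..<v} = sum f ({0..<v} - C - {x}) + sum f C + (f x :: real)"
  by (rule sum_atLeastLessThan_remove) (use delsarte_less[OF C] x in auto)

lemma sum_remaining_adj:
  assumes y: "y \<in> C"
  shows "(\<Sum>w\<in>{0..<v} - C - {x}. adj w y) = real k - adj x y"
proof -
  have "real k = (\<Sum>w\<in>{0..<v}. adj w y)" by (simp add: srg_sum_edge_ind' delsarte_less[OF C y])
  also have "\<dots> = (\<Sum>w\<in>{0..<v} - C - {x}. adj w y) + (\<Sum>w\<in>C. adj w y) + adj x y"
    by (rule sum_remaining_split)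
  also have "(\<Sum>w\<in>C. adj w y) = 0" by (rule sum.neutral) (simp add: delsarte_adj[OF C _ y])
  finally show ?thesis by simp
qed

lemma sum_remaining_adj_x: "(\<Sum>w\<in>{0..<v} - C - {x}. adj x w) = real k + s"
proof -
  have "real k = (\<Sum>w\<in>{0..<v}. adj x w)" by (simp add: srg_sum_edge_ind x(1))
  also have "\<dots> = (\<Sum>w\<in>{0..<v} - C - {x}. adj x w) + (\<Sum>w\<in>C. adj x w) + adj x x"
    by (rule sum_remaining_split)
  finally show ?thesis using delsarte_neighbours_outside[OF C x] by (simp add: edge_ind_irrefl x(1))
qed

lemma sum_remaining_paths:
  assumes y: "y \<in> C"
  shows "(\<Sum>w\<in>{0..<v} - C - {x}. adj x w * adj w y) = real mu + (real lam - real mu) * adj x y"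
proof -
  have yv: "y < v" by (rule delsarte_less[OF C y])
  have "(\<Sum>w\<in>{0..<v}. adj x w * adj w y) = (\<Sum>w\<in>{0..<v}. adj w x * adj w y)"
    by (intro sum.cong refl) (metis atLeastLessThan_iff edge_ind_sym x(1))
  also have "\<dots> = real mu + (real lam - real mu) * adj x y"
    using x y by (auto simp: srg_adjacency_square' yv)
  finally have "(\<Sum>w\<in>{0..<v}. adj x w * adj w y) = real mu + (real lam - real mu) * adj x y" .
  moreover have "(\<Sum>w\<in>{0..<v}. adj x w * adj w y)
      = (\<Sum>w\<in>{0..<v} - C - {x}. adj x w * adj w y) + (\<Sum>w\<in>C. adj x w * adj w y) + adj x x * adj x y"
    by (rule sum_remaining_split)
  moreover have "(\<Sum>w\<in>C. adj x w * adj w y) = 0" by (rule sum.neutral) (simp add: delsarte_adj[OF C _ y])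
  ultimately show ?thesis by (simp add: edge_ind_irrefl x(1))
qed

lemma sum_remaining_common:
  assumes y: "y \<in> C" and y': "y' \<in> C"
  shows "(\<Sum>w\<in>{0..<v} - C - {x}. adj w y * adj w y')
    = real mu + (if y = y' then real k - real mu else 0) - adj x y * adj x y'"
proof -
  have "(\<Sum>w\<in>{0..<v}. adj w y * adj w y') = real mu + (if y = y' then real k - real mu else 0)"
    using delsarte_adj[OF C y y'] by (simp add: srg_adjacency_square' delsarte_less[OF C y] delsarte_less[OF C y'])
  moreover have "(\<Sum>w\<in>{0..<v}. adj w y * adj w y')
      = (\<Sum>w\<in>{0..<v} - C - {x}. adj w y * adj w y') + (\<Sum>w\<in>C. adj w y * adj w y') + adj x y * adj x y'"
    by (rule sum_remaining_split)
  moreover have "(\<Sum>w\<in>C. adj w y * adj w y') = 0" by (rule sum.neutral) (simp add: delsarte_adj[OF C _ y])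
  ultimately show ?thesis by simp
qed

lemma card_remaining: "real (card ({0..<v} - C - {x})) = real v - real (card C) - 1"
proof -
  have sub: "C \<subseteq> {0..<v}" using delsarte_less[OF C] by auto
  have "card ({0..<v} - C - {x}) = card ({0..<v} - C) - 1" using x by (simp add: card_Diff_singleton)
  moreover have "card ({0..<v} - C) = v - card C"
    using sub delsarte_finite[OF C] by (simp add: card_Diff_subset)
  moreover have "card C < v"
    using sub x by (metis card_atLeastLessThan card_subset_eq diff_zero finite_atLeastLessThan
        le_neq_implies_less card_mono atLeastLessThan_iff zero_le)
  ultimately show ?thesis by (simp add: of_nat_diff)
qed

lemma sum_remaining_common_x:
  "(\<Sum>w\<in>{0..<v} - C - {x}. \<Sum>y\<in>C. adj x y * adj w y) = - s * (real k - 1)"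
proof -
  have "(\<Sum>w\<in>{0..<v} - C - {x}. \<Sum>y\<in>C. adj x y * adj w y)
      = (\<Sum>y\<in>C. \<Sum>w\<in>{0..<v} - C - {x}. adj x y * adj w y)" by (rule sum.swap)
  also have "\<dots> = (\<Sum>y\<in>C. adj x y * (real k - adj x y))"
    by (intro sum.cong refl) (simp add: sum_distrib_left[symmetric] sum_remaining_adj)
  also have "\<dots> = real k * (\<Sum>y\<in>C. adj x y) - (\<Sum>y\<in>C. adj x y)"
    by (simp add: algebra_simps sum_subtractf sum_distrib_left edge_ind_idem)
  finally show ?thesis using delsarte_neighbours_outside[OF C x] by (simp add: algebra_simps)
qed

lemma sum_remaining_common_x_adj:
  "(\<Sum>w\<in>{0..<v} - C - {x}. adj x w * (\<Sum>y\<in>C. adj x y * adj w y)) = - s * real lam"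
proof -
  have "(\<Sum>w\<in>{0..<v} - C - {x}. adj x w * (\<Sum>y\<in>C. adj x y * adj w y))
      = (\<Sum>w\<in>{0..<v} - C - {x}. \<Sum>y\<in>C. adj x y * (adj x w * adj w y))"
    by (simp add: sum_distrib_left algebra_simps)
  also have "\<dots> = (\<Sum>y\<in>C. \<Sum>w\<in>{0..<v} - C - {x}. adj x y * (adj x w * adj w y))"
    by (rule sum.swap)
  also have "\<dots> = (\<Sum>y\<in>C. adj x y * (real mu + (real lam - real mu) * adj x y))"
    by (intro sum.cong refl) (simp add: sum_distrib_left[symmetric] sum_remaining_paths)
  also have "\<dots> = (\<Sum>y\<in>C. real mu * adj x y + (real lam - real mu) * (adj x y * adj x y))"
    by (intro sum.cong refl) (simp add: algebra_simps)
  also have "\<dots> = real mu * (\<Sum>y\<in>C. adj x y) + (real lam - real mu) * (\<Sum>y\<in>C. adj x y)"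
    by (simp add: sum.distrib sum_distrib_left edge_ind_idem)
  finally show ?thesis using delsarte_neighbours_outside[OF C x] by (simp add: algebra_simps)
qed

lemma sum_remaining_common_x_square:
  "(\<Sum>w\<in>{0..<v} - C - {x}. (\<Sum>y\<in>C. adj x y * adj w y) * (\<Sum>y\<in>C. adj x y * adj w y))
    = real mu * s * s - s * (real k - real mu) - s * s"
proof -
  let ?W = "{0..<v} - C - {x}"
  have "(\<Sum>w\<in>?W. (\<Sum>y\<in>C. adj x y * adj w y) * (\<Sum>y\<in>C. adj x y * adj w y))
      = (\<Sum>w\<in>?W. \<Sum>y\<in>C. \<Sum>y'\<in>C. (adj x y * adj x y') * (adj w y * adj w y'))"
    by (simp add: sum_product algebra_simps)
  also have "\<dots> = (\<Sum>y\<in>C. \<Sum>w\<in>?W. \<Sum>y'\<in>C. (adj x y * adj x y') * (adj w y * adj w y'))"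
    by (rule sum.swap)
  also have "\<dots> = (\<Sum>y\<in>C. \<Sum>y'\<in>C. \<Sum>w\<in>?W. (adj x y * adj x y') * (adj w y * adj w y'))"
    by (intro sum.cong refl sum.swap)
  also have "\<dots> = (\<Sum>y\<in>C. \<Sum>y'\<in>C. (adj x y * adj x y')
      * (real mu + (if y = y' then real k - real mu else 0) - adj x y * adj x y'))"
    by (intro sum.cong refl) (simp add: sum_distrib_left[symmetric] sum_remaining_common)
  also have "\<dots> = (\<Sum>y\<in>C. \<Sum>y'\<in>C. real mu * (adj x y * adj x y')
      + (if y = y' then (real k - real mu) * adj x y else 0) - adj x y * adj x y')"
  proof (intro sum.cong refl)
    fix y y'
    have "(adj x y * adj x y') * (adj x y * adj x y') = adj x y * adj x y'"
      by (metis edge_ind_idem mult.assoc mult.commute)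
    then show "(adj x y * adj x y') * (real mu + (if y = y' then real k - real mu else 0) - adj x y * adj x y')
        = real mu * (adj x y * adj x y') + (if y = y' then (real k - real mu) * adj x y else 0) - adj x y * adj x y'"
      by (auto simp: algebra_simps edge_ind_idem)
  qed
  also have "\<dots> = real mu * (\<Sum>y\<in>C. \<Sum>y'\<in>C. adj x y * adj x y')
      + (\<Sum>y\<in>C. \<Sum>y'\<in>C. (if y = y' then (real k - real mu) * adj x y else 0))
      - (\<Sum>y\<in>C. \<Sum>y'\<in>C. adj x y * adj x y')"
    by (simp add: sum.distrib sum_subtractf sum_distrib_left)
  also have "(\<Sum>y\<in>C. \<Sum>y'\<in>C. adj x y * adj x y') = (\<Sum>y\<in>C. adj x y) * (\<Sum>y\<in>C. adj x y)"
    by (simp add: sum_product)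
  also have "(\<Sum>y\<in>C. \<Sum>y'\<in>C. (if y = y' then (real k - real mu) * adj x y else 0))
      = (real k - real mu) * (\<Sum>y\<in>C. adj x y)"
    using delsarte_finite[OF C] by (simp add: sum_distrib_left)
  finally show ?thesis using delsarte_neighbours_outside[OF C x] by (simp add: algebra_simps)
qed

text \<open>Two vertices \<open>x \<noteq> w\<close> outside a Delsarte coclique have \<open>-(e\<^sup>+)\<^sup>2 - e\<^sup>- - e\<^sup>+ [x \<sim> w]\<close>
  common neighbours in it: the moments above show that
  \<open>\<Sum>\<^sub>w (|N(x) \<inter> N(w) \<inter> C| + r\<^sup>2 + s + r [x \<sim> w])\<^sup>2 = 0\<close>.\<close>

lemma delsarte_common_neighbours_outside:
  assumes w: "w < v" "w \<notin> C" and xw: "x \<noteq> w"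
  shows "(\<Sum>y\<in>C. adj x y * adj w y) = - r * r - s - r * adj x w"
proof -
  define W where "W = {0..<v} - C - {x}"
  define T where "T w = (\<Sum>y\<in>C. adj x y * adj w y)" for w
  define b where "b w = - r * r - s - r * adj x w" for w
  have Sb: "(\<Sum>w\<in>W. T w * b w) = (- r * r - s) * (- s * (real k - 1)) - r * (- s * real lam)"
  proof -
    have "(\<Sum>w\<in>W. T w * b w) = (- r * r - s) * (\<Sum>w\<in>W. T w) - r * (\<Sum>w\<in>W. adj x w * T w)"
      unfolding b_def by (simp add: algebra_simps sum_subtractf sum_distrib_left sum_negf)
    then show ?thesis unfolding W_def T_def sum_remaining_common_x sum_remaining_common_x_adj .
  qed
  have Sb2: "(\<Sum>w\<in>W. b w * b w)
      = (- r * r - s) * (- r * r - s) * (real v - real (card C) - 1) + (r * r - 2 * (- r * r - s) * r) * (real k + s)"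
  proof -
    have "(\<Sum>w\<in>W. b w * b w) = (\<Sum>w\<in>W. (- r * r - s) * (- r * r - s) + (r * r - 2 * (- r * r - s) * r) * adj x w)"
      unfolding b_def by (intro sum.cong refl) (simp add: algebra_simps edge_ind_idem)
    also have "\<dots> = (- r * r - s) * (- r * r - s) * real (card W) + (r * r - 2 * (- r * r - s) * r) * (\<Sum>w\<in>W. adj x w)"
      by (simp add: sum.distrib sum_distrib_left)
    finally show ?thesis unfolding W_def card_remaining sum_remaining_adj_x .
  qed
  have "(\<Sum>w\<in>W. (T w - b w) * (T w - b w)) = (\<Sum>w\<in>W. T w * T w) - 2 * (\<Sum>w\<in>W. T w * b w) + (\<Sum>w\<in>W. b w * b w)"
    by (simp add: algebra_simps sum.distrib sum_subtractf sum_distrib_left)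
  also have "\<dots> = 0"
  proof -
    have P2: "real mu * (real v - real (card C)) = real k * (real k - r)"
      using delsarte_card_mu[OF C] mu_v by (simp add: algebra_simps)
    have "real mu * (real mu * s * s - s * (real k - real mu) - s * s
        - 2 * ((- r * r - s) * (- s * (real k - 1)) - r * (- s * real lam))
        + ((- r * r - s) * (- r * r - s) * (real v - real (card C) - 1) + (r * r - 2 * (- r * r - s) * r) * (real k + s))) = 0"
      using rs_sum rs_prod delsarte_condition P2 delsarte_card_mu[OF C] by (Groebner_Basis.algebra)
    then show ?thesis
      unfolding Sb Sb2 using sum_remaining_common_x_square mu_pos unfolding W_def T_def by simp
  qed
  finally have "\<forall>w\<in>W. (T w - b w) * (T w - b w) = 0"
    using sum_nonneg_eq_0_iff[of W "\<lambda>w. (T w - b w) * (T w - b w)"] unfolding W_def by simp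
  moreover have "w \<in> W" unfolding W_def using w xw by auto
  ultimately show ?thesis unfolding T_def b_def by simp
qed

end

context
  fixes Y Z
  assumes Y: "delsarte Y" and Z: "delsarte Z" and YZ: "Y \<noteq> Z"
begin

lemma card_diff_delsarte_sym: "card (Z - Y) = card (Y - Z)"
  using card_Int_Diff[OF delsarte_finite[OF Y], of Z] card_Int_Diff[OF delsarte_finite[OF Z], of Y]
    delsarte_card_eq[OF Y Z] by (simp add: Int_commute)

lemma card_diff_delsarte_pos: "card (Y - Z) \<ge> 1"
proof (rule ccontr)
  assume "\<not> 1 \<le> card (Y - Z)"
  then have "card (Y - Z) = 0" "card (Z - Y) = 0" using card_diff_delsarte_sym by auto
  then have "Y - Z = {}" and "Z - Y = {}"
    using delsarte_finite[OF Y] delsarte_finite[OF Z] by (simp_all add: card_eq_0_iff)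
  then show False using YZ by blast
qed

lemma delsarte_block_subset: "z \<in> Z - Y \<Longrightarrow> {y\<in>Y. E y z} \<subseteq> Y - Z"
  using delsarte_coclique[OF Z] unfolding coclique_def by auto

lemma card_delsarte_block: "z \<in> Z - Y \<Longrightarrow> real (card {y\<in>Y. E y z}) = - s"
  using card_delsarte_neighbours[OF Y] delsarte_less[OF Z] by blast

lemma sum_delsarte_diff_adj: "z \<in> Z - Y \<Longrightarrow> (\<Sum>y\<in>Y - Z. adj y z) = - s"
proof -
  assume z: "z \<in> Z - Y"
  have "(\<Sum>y\<in>Y. adj y z) = (\<Sum>y\<in>Y \<inter> Z. adj y z) + (\<Sum>y\<in>Y - Z. adj y z)"
    by (rule sum.Int_Diff[OF delsarte_finite[OF Y]])
  moreover have "(\<Sum>y\<in>Y \<inter> Z. adj y z) = 0" by (rule sum.neutral) (use delsarte_adj[OF Z] z in auto)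
  moreover have "(\<Sum>y\<in>Y. adj y z) = - s" using delsarte_neighbours_outside' Y z delsarte_less[OF Z] by auto
  ultimately show ?thesis by simp
qed

lemma card_delsarte_blocks_inter:
  assumes z: "z \<in> Z - Y" and z': "z' \<in> Z - Y" and zz: "z \<noteq> z'"
  shows "real (card ({y\<in>Y. E y z} \<inter> {y\<in>Y. E y z'})) = - r * r - s"
proof -
  have zv: "z < v" and z'v: "z' < v" using delsarte_less[OF Z] z z' by auto
  have "{y\<in>Y. E y z} \<inter> {y\<in>Y. E y z'} = {y\<in>Y. E z y \<and> E z' y}"
    using srg_sym zv z'v delsarte_less[OF Y] by blast
  then have "real (card ({y\<in>Y. E y z} \<inter> {y\<in>Y. E y z'})) = (\<Sum>y\<in>Y. adj z y * adj z' y)"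
    by (simp add: card_common_neighbours_eq_sum delsarte_finite[OF Y])
  also have "\<dots> = - r * r - s - r * adj z z'"
    using delsarte_common_neighbours_outside[OF Y zv _ z'v _ zz] z z' by simp
  finally show ?thesis using delsarte_adj[OF Z] z z' by simp
qed

lemma inj_on_delsarte_blocks: "inj_on (\<lambda>z. {y\<in>Y. E y z}) (Z - Y)"
proof (rule inj_onI, rule ccontr)
  fix z z' assume z: "z \<in> Z - Y" and z': "z' \<in> Z - Y" and zz: "z \<noteq> z'"
    and eq: "{y\<in>Y. E y z} = {y\<in>Y. E y z'}"
  have "- s = - r * r - s" using card_delsarte_block[OF z] card_delsarte_blocks_inter[OF z z' zz] eq by simp
  then show False using r_pos by simp
qed

lemma card_delsarte_block_pairs:
  assumes y: "y \<in> Y - Z" and y': "y' \<in> Y - Z" and yy: "y \<noteq> y'"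
  shows "real (card {z\<in>Z - Y. E y z \<and> E y' z}) = - r * r - s"
proof -
  have yv: "y < v" and y'v: "y' < v" using delsarte_less[OF Y] y y' by auto
  have "real (card {z\<in>Z - Y. E y z \<and> E y' z}) = (\<Sum>z\<in>Z - Y. adj y z * adj y' z)"
    by (rule card_common_neighbours_eq_sum) (simp add: delsarte_finite[OF Z])
  also have "\<dots> = (\<Sum>z\<in>Z. adj y z * adj y' z)"
  proof -
    have "(\<Sum>z\<in>Z. adj y z * adj y' z) = (\<Sum>z\<in>Z \<inter> Y. adj y z * adj y' z) + (\<Sum>z\<in>Z - Y. adj y z * adj y' z)"
      by (rule sum.Int_Diff[OF delsarte_finite[OF Z]])
    moreover have "(\<Sum>z\<in>Z \<inter> Y. adj y z * adj y' z) = 0"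
      by (rule sum.neutral) (use delsarte_adj[OF Y] y in auto)
    ultimately show ?thesis by simp
  qed
  also have "\<dots> = - r * r - s - r * adj y y'"
    using delsarte_common_neighbours_outside[OF Z yv _ y'v _ yy] y y' by simp
  finally show ?thesis using delsarte_adj[OF Y] y y' by simp
qed

text \<open>Count the triples \<open>(y, y', z)\<close> with \<open>y, y' \<in> Y - Z\<close> both adjacent to \<open>z \<in> Z - Y\<close>.\<close>

lemma card_delsarte_diff: "real (card (Y - Z)) * (r * r + s) = r * r - s * s"
proof -
  define n where "n = real (card (Y - Z))"
  define a0 where "a0 = - r * r - s"
  have self: "(\<Sum>z\<in>Z - Y. adj y z * adj y z) = - s" if y: "y \<in> Y - Z" for y
  proof -
    have "(\<Sum>z\<in>Z. adj y z) = (\<Sum>z\<in>Z \<inter> Y. adj y z) + (\<Sum>z\<in>Z - Y. adj y z)"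
      by (rule sum.Int_Diff[OF delsarte_finite[OF Z]])
    moreover have "(\<Sum>z\<in>Z \<inter> Y. adj y z) = 0" by (rule sum.neutral) (use delsarte_adj[OF Y] y in auto)
    moreover have "(\<Sum>z\<in>Z. adj y z) = - s" using delsarte_neighbours_outside[OF Z] delsarte_less[OF Y] y by auto
    ultimately show ?thesis by (simp add: edge_ind_idem)
  qed
  have "(\<Sum>z\<in>Z - Y. (\<Sum>y\<in>Y - Z. adj y z) * (\<Sum>y\<in>Y - Z. adj y z)) = n * (s * s)"
    unfolding n_def using card_diff_delsarte_sym by (simp add: sum_delsarte_diff_adj)
  moreover have "(\<Sum>z\<in>Z - Y. (\<Sum>y\<in>Y - Z. adj y z) * (\<Sum>y\<in>Y - Z. adj y z)) = n * (- s) + n * (n - 1) * a0"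
  proof -
    have "(\<Sum>z\<in>Z - Y. (\<Sum>y\<in>Y - Z. adj y z) * (\<Sum>y\<in>Y - Z. adj y z))
        = (\<Sum>z\<in>Z - Y. \<Sum>y\<in>Y - Z. \<Sum>y'\<in>Y - Z. adj y z * adj y' z)"
      by (simp add: sum_product)
    also have "\<dots> = (\<Sum>y\<in>Y - Z. \<Sum>z\<in>Z - Y. \<Sum>y'\<in>Y - Z. adj y z * adj y' z)" by (rule sum.swap)
    also have "\<dots> = (\<Sum>y\<in>Y - Z. \<Sum>y'\<in>Y - Z. \<Sum>z\<in>Z - Y. adj y z * adj y' z)"
      by (intro sum.cong refl sum.swap)
    also have "\<dots> = (\<Sum>y\<in>Y - Z. \<Sum>y'\<in>Y - Z. a0 + (if y = y' then - s - a0 else 0))"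
    proof (intro sum.cong refl)
      fix y y' assume y: "y \<in> Y - Z" and y': "y' \<in> Y - Z"
      show "(\<Sum>z\<in>Z - Y. adj y z * adj y' z) = a0 + (if y = y' then - s - a0 else 0)"
      proof (cases "y = y'")
        case True
        then show ?thesis using self[OF y] by simp
      next
        case False
        then show ?thesis
          using card_delsarte_block_pairs[OF y y' False] delsarte_finite[OF Z]
            card_common_neighbours_eq_sum[of "Z - Y" E y y', where 'a=real] unfolding a0_def by simp
      qed
    qed
    also have "\<dots> = n * (n * a0 + (- s - a0))"
      unfolding n_def by (simp add: sum.distrib delsarte_finite[OF Y])
    finally show ?thesis by (simp add: algebra_simps)
  qed
  ultimately have "n * (s * s) = n * (- s + (n - 1) * a0)" by (simp add: algebra_simps)
  moreover have "n > 0" using card_diff_delsarte_pos unfolding n_def by simp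
  ultimately have "s * s = - s + (n - 1) * a0" by simp
  then show ?thesis unfolding n_def[symmetric] a0_def by (Groebner_Basis.algebra)
qed

lemma delsarte_denominator_nonzero: "r * r + s \<noteq> 0"
proof
  assume a: "r * r + s = 0"
  have "r * r - s * s = 0" using card_delsarte_diff a by simp
  with a have "s * (s + 1) = 0" by (Groebner_Basis.algebra)
  then have s1: "s = -1" using s_neg by simp
  then have "(r - 1) * (r + 1) = 0" using a by (simp add: algebra_simps)
  then have r1: "r = 1" using r_pos by simp
  have "real k * 2 = 2" using delsarte_condition s1 r1 by simp
  then show False using r_less_k r1 by simp
qed

lemma card_delsarte_diff_eq: "real (card (Y - Z)) = (r^2 - s^2) / (r^2 + s)"
proof -
  show ?thesis using card_delsarte_diff delsarte_denominator_nonzero by (simp add: power2_eq_square eq_divide_eq)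
qed

lemma delsarte_pair_design:
  "symmetric_design (Y - Z) ((\<lambda>z. {y\<in>Y. E y z}) ` (Z - Y)) ((r^2 - s^2) / (r^2 + s)) (- s) (- (r^2) - s)"
  unfolding symmetric_design_def design2_def
proof (intro conjI ballI impI)
  show "finite (Y - Z)" using delsarte_finite[OF Y] by simp
  show "real (card (Y - Z)) = (r^2 - s^2) / (r^2 + s)" by (rule card_delsarte_diff_eq)
  show "real (card ((\<lambda>z. {y\<in>Y. E y z}) ` (Z - Y))) = (r^2 - s^2) / (r^2 + s)"
    using card_image[OF inj_on_delsarte_blocks] card_diff_delsarte_sym card_delsarte_diff_eq by simp
next
  fix b assume "b \<in> (\<lambda>z. {y\<in>Y. E y z}) ` (Z - Y)"
  then obtain z where z: "z \<in> Z - Y" and bz: "b = {y\<in>Y. E y z}" by auto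
  show "b \<subseteq> Y - Z" using delsarte_block_subset[OF z] bz by simp
  show "real (card b) = - s" using card_delsarte_block[OF z] bz by simp
next
  fix x y assume x: "x \<in> Y - Z" and y: "y \<in> Y - Z" and xy: "x \<noteq> y"
  have "{b \<in> (\<lambda>z. {y\<in>Y. E y z}) ` (Z - Y). x \<in> b \<and> y \<in> b}
      = (\<lambda>z. {y\<in>Y. E y z}) ` {z\<in>Z - Y. E x z \<and> E y z}"
    using x y by auto
  moreover have "card ((\<lambda>z. {y\<in>Y. E y z}) ` {z\<in>Z - Y. E x z \<and> E y z}) = card {z\<in>Z - Y. E x z \<and> E y z}"
    by (rule card_image, rule inj_on_subset[OF inj_on_delsarte_blocks]) auto
  ultimately show "real (card {b \<in> (\<lambda>z. {y\<in>Y. E y z}) ` (Z - Y). x \<in> b \<and> y \<in> b}) = - (r^2) - s"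
    using card_delsarte_block_pairs[OF x y xy] by (simp add: power2_eq_square)
qed

lemma card_delsarte_inter: "real (card (Y \<inter> Z)) * (r * r + s) = r * (s + 1)"
proof -
  have "real (card (Y \<inter> Z)) = real (card Y) - real (card (Y - Z))"
    using card_Int_Diff[OF delsarte_finite[OF Y], of Z] by simp
  then show ?thesis using card_delsarte_diff delsarte_card_formula[OF Y] by (Groebner_Basis.algebra)
qed

lemma card_delsarte_inter_eq: "real (card (Y \<inter> Z)) = (s + 1) * r / (r^2 + s)"
  using card_delsarte_inter delsarte_denominator_nonzero by (simp add: power2_eq_square field_simps)

lemma sum_delsarte_diff_common_neighbours:
  assumes w: "w < v" "w \<notin> Y" "w \<notin> Z"
  shows "(\<Sum>z\<in>Z - Y. \<Sum>y\<in>Y. adj w y * adj z y)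
    = real (card (Z - Y)) * (- r * r - s) - r * (\<Sum>z\<in>Z - Y. adj w z)"
proof -
  have "(\<Sum>z\<in>Z - Y. \<Sum>y\<in>Y. adj w y * adj z y) = (\<Sum>z\<in>Z - Y. (- r * r - s) - r * adj w z)"
  proof (intro sum.cong refl)
    fix z assume z: "z \<in> Z - Y"
    then have "z < v" "w \<noteq> z" using delsarte_less[OF Z] w by auto
    then show "(\<Sum>y\<in>Y. adj w y * adj z y) = (- r * r - s) - r * adj w z"
      using delsarte_common_neighbours_outside[OF Y w(1,2)] z by simp
  qed
  then show ?thesis by (simp add: sum_subtractf sum_distrib_left)
qed

lemma sum_delsarte_diff_neighbours_adj:
  "(\<Sum>z\<in>Z - Y. \<Sum>y\<in>Y. adj w y * adj z y) = - s * (\<Sum>y\<in>Y - Z. adj w y)"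
proof -
  have "(\<Sum>z\<in>Z - Y. \<Sum>y\<in>Y. adj w y * adj z y) = (\<Sum>y\<in>Y. adj w y * (\<Sum>z\<in>Z - Y. adj z y))"
    by (subst sum.swap) (simp add: sum_distrib_left)
  also have "\<dots> = (\<Sum>y\<in>Y \<inter> Z. adj w y * (\<Sum>z\<in>Z - Y. adj z y)) + (\<Sum>y\<in>Y - Z. adj w y * (\<Sum>z\<in>Z - Y. adj z y))"
    by (rule sum.Int_Diff[OF delsarte_finite[OF Y]])
  also have "(\<Sum>y\<in>Y \<inter> Z. adj w y * (\<Sum>z\<in>Z - Y. adj z y)) = 0"
    by (intro sum.neutral ballI) (simp add: sum.neutral delsarte_adj[OF Z])
  also have "(\<Sum>y\<in>Y - Z. adj w y * (\<Sum>z\<in>Z - Y. adj z y)) = (\<Sum>y\<in>Y - Z. adj w y * (- s))"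
  proof (intro sum.cong refl)
    fix y assume y: "y \<in> Y - Z"
    have "(\<Sum>z\<in>Z. adj z y) = (\<Sum>z\<in>Z \<inter> Y. adj z y) + (\<Sum>z\<in>Z - Y. adj z y)"
      by (rule sum.Int_Diff[OF delsarte_finite[OF Z]])
    moreover have "(\<Sum>z\<in>Z \<inter> Y. adj z y) = 0" by (rule sum.neutral) (use delsarte_adj[OF Y] y in auto)
    moreover have "(\<Sum>z\<in>Z. adj z y) = - s"
      using delsarte_neighbours_outside'[OF Z] delsarte_less[OF Y] y by auto
    ultimately show "adj w y * (\<Sum>z\<in>Z - Y. adj z y) = adj w y * (- s)" by simp
  qed
  finally show ?thesis by (simp add: sum_distrib_left mult.commute)
qed

text \<open>Count the edges between \<open>Y - Z\<close> and the neighbours of \<open>w\<close> in \<open>Z - Y\<close> in two ways.\<close>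

lemma delsarte_inter_neighbours:
  assumes w: "w < v" "w \<notin> Y" "w \<notin> Z"
  shows "(\<Sum>u\<in>Y \<inter> Z. adj w u) = r"
proof -
  define p where "p = (\<Sum>u\<in>Y \<inter> Z. adj w u)"
  have "(\<Sum>z\<in>Z. adj w z) = (\<Sum>z\<in>Z \<inter> Y. adj w z) + (\<Sum>z\<in>Z - Y. adj w z)"
    by (rule sum.Int_Diff[OF delsarte_finite[OF Z]])
  then have wZY: "(\<Sum>z\<in>Z - Y. adj w z) = - s - p"
    using delsarte_neighbours_outside[OF Z w(1,3)] unfolding p_def by (simp add: Int_commute)
  have "(\<Sum>y\<in>Y. adj w y) = (\<Sum>y\<in>Y \<inter> Z. adj w y) + (\<Sum>y\<in>Y - Z. adj w y)"
    by (rule sum.Int_Diff[OF delsarte_finite[OF Y]])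
  then have wYZ: "(\<Sum>y\<in>Y - Z. adj w y) = - s - p"
    using delsarte_neighbours_outside[OF Y w(1,2)] unfolding p_def by simp
  have "real (card (Z - Y)) * (- r * r - s) - r * (- s - p) = - s * (- s - p)"
    using sum_delsarte_diff_common_neighbours[OF w] sum_delsarte_diff_neighbours_adj wZY wYZ
    by simp
  moreover have "real (card (Z - Y)) = real (card (Y - Z))" using card_diff_delsarte_sym by simp
  ultimately have "p * (r - s) = r * (r - s)" using card_delsarte_diff by (Groebner_Basis.algebra)
  moreover have "r - s \<noteq> 0" using r_pos s_neg by simp
  ultimately show ?thesis unfolding p_def by simp
qed
end

lemma card_delsarte_inter_neighbours:
  assumes Y: "delsarte Y" and Z: "delsarte Z" and YZ: "Y \<noteq> Z" and w: "w < v" "w \<notin> Y" "w \<notin> Z"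
  shows "real (card ({y\<in>Y. E y w} \<inter> (Y \<inter> Z))) = r"
proof -
  have "{y\<in>Y. E y w} \<inter> (Y \<inter> Z) = {u\<in>Y \<inter> Z. E u w}" by blast
  then have "real (card ({y\<in>Y. E y w} \<inter> (Y \<inter> Z))) = (\<Sum>u\<in>Y \<inter> Z. adj u w)"
    using card_neighbours_eq_sum[of "Y \<inter> Z" E w, where 'a=real] delsarte_finite[OF Y] by simp
  also have "\<dots> = (\<Sum>u\<in>Y \<inter> Z. adj w u)"
    using delsarte_less[OF Y] w(1) by (intro sum.cong refl) (metis IntD1 edge_ind_sym)
  finally show ?thesis using delsarte_inter_neighbours[OF Y Z YZ w] by simp
qed

lemma delsarte_pair_properties:
  assumes m: "\<And>C. delsarte C \<Longrightarrow> card C = m"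
  shows "\<forall>Y\<in>{C. delsarte C}. \<forall>Z\<in>{C. delsarte C}. Y \<noteq> Z \<longrightarrow>
    symmetric_design (Y - Z) ((\<lambda>z. {y\<in>Y. E y z}) ` (Z - Y)) ((r^2 - s^2) / (r^2 + s)) (- s) (- (r^2) - s)
    \<and> real (card (Y \<inter> Z)) = real m - (r^2 - s^2) / (r^2 + s)
    \<and> real (card (Y \<inter> Z)) = (s + 1) * r / (r^2 + s)
    \<and> (\<forall>w<v. w \<notin> Y \<and> w \<notin> Z \<longrightarrow> real (card ({y\<in>Y. E y w} \<inter> (Y \<inter> Z))) = r)"
proof (intro ballI impI, goal_cases)
  case (1 Y Z)
  then have Y: "delsarte Y" and Z: "delsarte Z" and YZ: "Y \<noteq> Z" by simp_all
  then show ?case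
    using delsarte_pair_design[OF Y Z YZ] card_delsarte_diff_eq[OF Y Z YZ] card_delsarte_inter_eq[OF Y Z YZ]
      card_delsarte_inter_neighbours[OF Y Z YZ] card_Int_Diff[OF delsarte_finite[OF Y], of Z] m[OF Y]
    by simp
qed

lemma card_delsarte_inter_eq_iff:
  assumes "delsarte X" "delsarte Y" "X \<noteq> Y" "delsarte Z" "delsarte Z'" "Z \<noteq> Z'"
  shows "card (X \<inter> Y) = card (Z \<inter> Z')"
  using card_delsarte_inter_eq[OF assms(1-3)] card_delsarte_inter_eq[OF assms(4-6)] by simp

context
  fixes X Y Z
  assumes X: "delsarte X" and Y: "delsarte Y" and Z: "delsarte Z"
    and XY: "X \<noteq> Y" and XZ: "X \<noteq> Z" and YZ: "Y \<noteq> Z"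
begin

lemma sum_delsarte_outside_two_adj:
  assumes u: "u \<in> Y \<inter> Z"
  shows "(\<Sum>w\<in>X - (Y \<union> Z). adj w u) = (if u \<in> X then 0 else - s)"
proof (cases "u \<in> X")
  case True
  then show ?thesis by (simp add: sum.neutral delsarte_adj[OF X])
next
  case False
  have "(\<Sum>w\<in>X. adj w u) = (\<Sum>w\<in>X \<inter> (Y \<union> Z). adj w u) + (\<Sum>w\<in>X - (Y \<union> Z). adj w u)"
    by (rule sum.Int_Diff[OF delsarte_finite[OF X]])
  moreover have "(\<Sum>w\<in>X \<inter> (Y \<union> Z). adj w u) = 0"
    using u by (intro sum.neutral ballI) (auto simp: delsarte_adj[OF Y] delsarte_adj[OF Z])
  moreover have "(\<Sum>w\<in>X. adj w u) = - s"
    using delsarte_neighbours_outside'[OF X] delsarte_less[OF Y] u False by auto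
  ultimately show ?thesis using False by simp
qed

text \<open>Count the edges between \<open>X - (Y \<union> Z)\<close> and \<open>Y \<inter> Z\<close> in two ways.\<close>

lemma card_delsarte_triple_inter: "real (card (X \<inter> Y \<inter> Z)) * (r * r + s) = r - r * r"
proof -
  define a where "a = real (card (Y \<inter> Z))"
  define c where "c = real (card X)"
  define t where "t = real (card (X \<inter> Y \<inter> Z))"
  define W where "W = X - (Y \<union> Z)"
  have fX: "finite X" by (rule delsarte_finite[OF X])
  have aXY: "real (card (X \<inter> Y)) = a" and aXZ: "real (card (X \<inter> Z)) = a"
    unfolding a_def using card_delsarte_inter_eq_iff X Y Z XY XZ YZ by metis+
  have cW: "real (card W) = c - 2 * a + t"
  proof -
    have "card X = card (X \<inter> (Y \<union> Z)) + card W" unfolding W_def by (rule card_Int_Diff[OF fX])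
    moreover have "card (X \<inter> (Y \<union> Z)) + card (X \<inter> Y \<inter> Z) = card (X \<inter> Y) + card (X \<inter> Z)"
      using card_Un_Int[of "X \<inter> Y" "X \<inter> Z"] fX by (simp add: Int_Un_distrib Int_assoc Int_left_commute)
    ultimately show ?thesis using aXY aXZ unfolding c_def t_def by simp
  qed
  have "(\<Sum>w\<in>W. \<Sum>u\<in>Y \<inter> Z. adj w u) = r * real (card W)"
  proof -
    have "(\<Sum>u\<in>Y \<inter> Z. adj w u) = r" if w: "w \<in> W" for w
      using delsarte_inter_neighbours[OF Y Z YZ] delsarte_less[OF X] w unfolding W_def by auto
    then show ?thesis by simp
  qed
  moreover have "(\<Sum>w\<in>W. \<Sum>u\<in>Y \<inter> Z. adj w u) = - s * (a - t)"
  proof -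
    have "(\<Sum>w\<in>W. \<Sum>u\<in>Y \<inter> Z. adj w u) = (\<Sum>u\<in>Y \<inter> Z. if u \<in> X then 0 else - s)"
      unfolding W_def by (subst sum.swap) (simp add: sum_delsarte_outside_two_adj)
    also have "\<dots> = - s * real (card (Y \<inter> Z - X))"
      using delsarte_finite[OF Y] by (simp add: sum.If_cases Diff_eq Int_commute)
    also have "real (card (Y \<inter> Z - X)) = a - t"
      using card_Int_Diff[of "Y \<inter> Z" X] delsarte_finite[OF Y] unfolding a_def t_def
      by (simp add: Int_commute Int_left_commute)
    finally show ?thesis .
  qed
  ultimately have "t * (r - s) = - s * a - r * c + 2 * r * a" using cW by (simp add: algebra_simps)
  then have "(r - s) * (r * r + s) * (t * (r * r + s) - (r - r * r)) = 0"
    using delsarte_card_formula[OF X] card_delsarte_inter[OF Y Z YZ]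
    unfolding c_def a_def by (Groebner_Basis.algebra)
  moreover have "r - s \<noteq> 0" using r_pos s_neg by simp
  ultimately show ?thesis using delsarte_denominator_nonzero[OF Y Z YZ] unfolding t_def by simp
qed

end

lemma card_delsarte_triple_inter_eq:
  "\<forall>X\<in>{C. delsarte C}. \<forall>Y\<in>{C. delsarte C}. \<forall>Z\<in>{C. delsarte C}. X \<noteq> Y \<and> X \<noteq> Z \<and> Y \<noteq> Z \<longrightarrow>
    real (card (X \<inter> Y \<inter> Z)) = (r - r^2) / (r^2 + s)"
proof (intro ballI impI, goal_cases)
  case (1 X Y Z)
  then show ?case
    using card_delsarte_triple_inter[of X Y Z] delsarte_denominator_nonzero[of Y Z]
    by (simp add: power2_eq_square field_simps)
qed

lemma delsarte_card_less: "delsarte C \<Longrightarrow> real (card C) < real v"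
proof -
  assume C: "delsarte C"
  have "real (card C) * (real k - s) = real v * (- s)" using delsarte_card[OF C] by (simp add: algebra_simps)
  moreover have "0 < real v * real k" using v_pos r_pos r_less_k by simp
  then have "real v * (- s) < real v * (real k - s)" by (simp add: right_diff_distrib)
  ultimately have "real (card C) * (real k - s) < real v * (real k - s)" by simp
  then show ?thesis using s_neg r_pos r_less_k by (simp add: mult_less_cancel_right)
qed

lemma delsarte_pair_identity:
  assumes Y: "delsarte Y" and Z: "delsarte Z" and YZ: "Y \<noteq> Z"
  shows "real v * (1 + real (card (Y \<inter> Z))) = real (card Y) * (real (card Y) + 1)"
proof -
  define a c where "a = real (card (Y \<inter> Z))" and "c = real (card Y)"
  have "(1 + r) * (r * r + s) * ((s - real k) * (1 + a) - s * (c + 1)) = 0"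
    using delsarte_condition delsarte_card_formula[OF Y] card_delsarte_inter[OF Y Z YZ]
    unfolding a_def c_def by (Groebner_Basis.algebra)
  then have "(s - real k) * (1 + a) = s * (c + 1)"
    using delsarte_denominator_nonzero[OF Y Z YZ] r_pos by simp
  then have "s * (real v * (1 + a)) = s * (c * (c + 1))"
    using delsarte_card[OF Y] unfolding c_def by (Groebner_Basis.algebra)
  then show ?thesis using s_neg unfolding a_def c_def by simp
qed

context
  fixes D Y Z
  assumes D: "finite D" "\<And>C. C \<in> D \<Longrightarrow> delsarte C"
    and Y: "Y \<in> D" and Z: "Z \<in> D" and YZ: "Y \<noteq> Z"
begin

lemma delsarte_family_variance:
  "(\<Sum>x\<in>{0..<v}. (real v * real (card {C\<in>D. x \<in> C}) - real (card D) * real (card Y))^2)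
    = real v * real (card D) * (real (card Y) + 1 - real (card D)) * (real v - real (card Y))"
proof -
  define N a c where "N = real (card D)" and "a = real (card (Y \<inter> Z))" and "c = real (card Y)"
  define d where "d x = real (card {C\<in>D. x \<in> C})" for x
  have sub: "C \<subseteq> {0..<v}" if "C \<in> D" for C using delsarte_less D(2)[OF that] by auto
  have cC: "real (card C) = c" if "C \<in> D" for C
    using delsarte_card_eq[OF D(2)[OF that] D(2)[OF Y]] unfolding c_def by simp
  have aC: "real (card (C \<inter> C')) = a" if "C \<in> D" "C' \<in> D" "C \<noteq> C'" for C C'
    using card_delsarte_inter_eq[OF D(2)[OF that(1)] D(2)[OF that(2)] that(3)]
      card_delsarte_inter_eq[OF D(2)[OF Y] D(2)[OF Z] YZ] unfolding a_def by simp
  have S1: "(\<Sum>x\<in>{0..<v}. d x) = N * c"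
    unfolding d_def using sum_card_members[OF _ D(1) sub] cC unfolding N_def by simp
  have "(\<Sum>x\<in>{0..<v}. d x * d x) = (\<Sum>C\<in>D. \<Sum>C'\<in>D. real (card (C \<inter> C')))"
    unfolding d_def by (rule sum_card_members_square[OF _ D(1) sub]) simp
  also have "\<dots> = (\<Sum>C\<in>D. \<Sum>C'\<in>D. a + (if C = C' then c - a else 0))"
  proof (intro sum.cong refl)
    fix C C' assume "C \<in> D" "C' \<in> D"
    then show "real (card (C \<inter> C')) = a + (if C = C' then c - a else 0)"
      using cC aC by (cases "C = C'") simp_all
  qed
  also have "\<dots> = N * (N * a + (c - a))" unfolding N_def by (simp add: sum.distrib D(1))
  finally have S2: "(\<Sum>x\<in>{0..<v}. d x * d x) = N * (N * a + (c - a))" .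
  have "(\<Sum>x\<in>{0..<v}. (real v * d x - N * c)^2)
      = real v * real v * (\<Sum>x\<in>{0..<v}. d x * d x) - 2 * real v * N * c * (\<Sum>x\<in>{0..<v}. d x)
        + real v * (N * c * (N * c))"
    by (simp add: power2_eq_square algebra_simps sum.distrib sum_subtractf sum_distrib_left)
  also have "\<dots> = real v * N * (c + 1 - N) * (real v - c)"
    unfolding S1 S2 using delsarte_pair_identity[OF D(2)[OF Y] D(2)[OF Z] YZ]
    unfolding a_def c_def by (Groebner_Basis.algebra)
  finally show ?thesis unfolding d_def N_def c_def .
qed

lemma card_delsarte_family_le: "card D \<le> card Y + 1"
proof -
  have "0 < real (card D)" using D(1) Y by (auto simp: card_gt_0_iff)
  then have pos: "0 < real v * real (card D) * (real v - real (card Y))"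
    using v_pos delsarte_card_less[OF D(2)[OF Y]] by simp
  have "0 \<le> real v * real (card D) * (real (card Y) + 1 - real (card D)) * (real v - real (card Y))"
    unfolding delsarte_family_variance[symmetric] by (intro sum_nonneg) simp
  then have "0 \<le> (real v * real (card D) * (real v - real (card Y))) * (real (card Y) + 1 - real (card D))"
    by (simp only: mult_ac)
  then have "0 \<le> real (card Y) + 1 - real (card D)" using pos by (simp add: zero_le_mult_iff)
  then show ?thesis by simp
qed

lemma card_delsarte_family_members:
  assumes N: "card D = card Y + 1" and x: "x < v"
  shows "real (card {C\<in>D. x \<in> C}) = 1 + real (card (Y \<inter> Z))"
proof -
  define f where "f x = (real v * real (card {C\<in>D. x \<in> C}) - real (card D) * real (card Y))^2" for x
  have "(\<Sum>x\<in>{0..<v}. f x) = 0"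
    unfolding f_def delsarte_family_variance by (simp add: N)
  then have "f x = 0" using sum_nonneg_eq_0_iff[of "{0..<v}" f] x unfolding f_def by simp
  then have "real v * real (card {C\<in>D. x \<in> C}) = real (card D) * real (card Y)"
    unfolding f_def by simp
  also have "\<dots> = real v * (1 + real (card (Y \<inter> Z)))"
    using N delsarte_pair_identity[OF D(2)[OF Y] D(2)[OF Z] YZ] by (simp add: algebra_simps)
  finally show ?thesis using v_pos by simp
qed

end

text \<open>Integrality of \<open>k\<close> and \<open>\<mu>\<close> rules out \<open>e\<^sup>+ = -e\<^sup>-\<close>: then \<open>k e\<^sup>+ = k - 2\<mu>\<close> and
  \<open>(k - 2\<mu>)\<^sup>2 = k\<^sup>2 (k - \<mu>)\<close>, so \<open>k\<close> divides \<open>k - 2\<mu> \<in> (0, k]\<close>, forcing \<open>\<mu> = 0\<close>.\<close>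

lemma r_plus_s_nonzero: "r + s \<noteq> 0"
proof
  assume "r + s = 0"
  then have s: "s = - r" by simp
  have r2: "r * r = real k - real mu" using rs_prod s by simp
  have "2 * (r * r) = real k * (1 + r)" using delsarte_condition s by (simp add: algebra_simps)
  then have kr: "real k * r = real k - 2 * real mu" using r2 by (simp add: algebra_simps)
  define K M where "K = int k" and "M = int mu"
  have "(real k - 2 * real mu) * (real k - 2 * real mu) = real k * real k * (r * r)"
    unfolding kr[symmetric] by (simp add: algebra_simps)
  also have "\<dots> = real k * real k * (real k - real mu)" using r2 by simp
  finally have "real_of_int ((K - 2 * M)^2) = real_of_int (K^2 * (K - M))"
    unfolding K_def M_def by (simp add: power2_eq_square)
  then have "(K - 2 * M)^2 = K^2 * (K - M)" by (simp only: of_int_eq_iff)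
  then have "K^2 dvd (K - 2 * M)^2" by simp
  then obtain q where q: "K - 2 * M = K * q"
    using pow_divides_pow_iff[of 2 K "K - 2 * M"] by (auto simp: dvd_def)
  have K: "K > 0" unfolding K_def using r_less_k r_pos by simp
  have "real k * r > 0" using r_less_k r_pos by simp
  then have "K - 2 * M > 0" using kr unfolding K_def M_def by simp
  then have "q > 0" using q K by (metis zero_less_mult_pos)
  moreover have "K * q \<le> K * 1" using q unfolding M_def by simp
  then have "q \<le> 1" using K by (simp only: mult_le_cancel_left_pos)
  ultimately have "q = 1" by simp
  then have "M = 0" using q by simp
  then show False using mu_pos unfolding M_def by simp
qed

context
  fixes D Y Z
  assumes D: "finite D" "\<And>C. C \<in> D \<Longrightarrow> delsarte C"
    and Y: "Y \<in> D" and Z: "Z \<in> D" and YZ: "Y \<noteq> Z" and N: "card D = card Y + 1"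
begin

lemma card_delsarte_family_inter:
  assumes "Z' \<in> D - {Y}"
  shows "real (card (Y \<inter> Z')) = (s + 1) * r / (r^2 + s)"
  using card_delsarte_inter_eq D(2) Y assms by auto

lemma card_delsarte_family_triple_inter:
  assumes "Z1 \<in> D - {Y}" "Z2 \<in> D - {Y}" "Z1 \<noteq> Z2"
  shows "real (card (Y \<inter> Z1 \<inter> Z2)) = (r - r^2) / (r^2 + s)"
  using card_delsarte_triple_inter[of Y Z1 Z2] D(2) Y assms delsarte_denominator_nonzero[OF D(2)[OF Y] D(2)[OF Z] YZ]
  by (auto simp: power2_eq_square field_simps)

lemma inj_on_delsarte_family_blocks: "inj_on (\<lambda>Z'. Y \<inter> Z') (D - {Y})"
proof (rule inj_onI, rule ccontr)
  fix Z1 Z2 assume Z1: "Z1 \<in> D - {Y}" and Z2: "Z2 \<in> D - {Y}" and eq: "Y \<inter> Z1 = Y \<inter> Z2" and ne: "Z1 \<noteq> Z2"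
  have "Y \<inter> Z1 \<inter> Z2 = Y \<inter> Z1" using eq by blast
  then have "(s + 1) * r / (r^2 + s) = (r - r^2) / (r^2 + s)"
    using card_delsarte_family_inter[OF Z1] card_delsarte_family_triple_inter[OF Z1 Z2 ne] by simp
  then have "r * (r + s) = 0"
    using delsarte_denominator_nonzero[OF D(2)[OF Y] D(2)[OF Z] YZ]
    by (simp add: power2_eq_square field_simps)
  then show False using r_plus_s_nonzero r_pos by simp
qed

lemma card_delsarte_family_Y: "real (card Y) = (r^2 + r * s + r - s^2) / (r^2 + s)"
  using delsarte_card_formula[OF D(2)[OF Y]] delsarte_denominator_nonzero[OF D(2)[OF Y] D(2)[OF Z] YZ]
  by (simp add: power2_eq_square field_simps)

lemma card_delsarte_family_blocks_through:
  assumes y: "y \<in> Y"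
  shows "real (card {b\<in>(\<lambda>Z'. Y \<inter> Z') ` (D - {Y}). y \<in> b}) = (s + 1) * r / (r^2 + s)"
proof -
  have "{b\<in>(\<lambda>Z'. Y \<inter> Z') ` (D - {Y}). y \<in> b} = (\<lambda>Z'. Y \<inter> Z') ` {Z'\<in>D - {Y}. y \<in> Z'}" using y by auto
  moreover have "card ((\<lambda>Z'. Y \<inter> Z') ` {Z'\<in>D - {Y}. y \<in> Z'}) = card {Z'\<in>D - {Y}. y \<in> Z'}"
    by (rule card_image, rule inj_on_subset[OF inj_on_delsarte_family_blocks]) auto
  moreover have "{C\<in>D. y \<in> C} = insert Y {Z'\<in>D - {Y}. y \<in> Z'}" using Y y by auto
  then have "card {C\<in>D. y \<in> C} = card {Z'\<in>D - {Y}. y \<in> Z'} + 1" using D(1) by simp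
  ultimately show ?thesis
    using card_delsarte_family_members[OF D Y Z YZ N delsarte_less[OF D(2)[OF Y] y]]
      card_delsarte_family_inter[of Z] Z YZ by simp
qed

lemma card_delsarte_family_blocks_inter:
  assumes b: "b \<in> (\<lambda>Z'. Y \<inter> Z') ` (D - {Y})" "b' \<in> (\<lambda>Z'. Y \<inter> Z') ` (D - {Y})" "b \<noteq> b'"
  shows "real (card (b \<inter> b')) = (r - r^2) / (r^2 + s)"
proof -
  obtain Z1 Z2 where Z12: "Z1 \<in> D - {Y}" "Z2 \<in> D - {Y}" and bZ: "b = Y \<inter> Z1" "b' = Y \<inter> Z2"
    using b(1,2) by blast
  then have "Z1 \<noteq> Z2" using b(3) by blast
  moreover have "b \<inter> b' = Y \<inter> Z1 \<inter> Z2" using bZ by blast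
  ultimately show ?thesis using card_delsarte_family_triple_inter[OF Z12] by simp
qed

lemma delsarte_family_design:
  "symmetric_design Y ((\<lambda>Z'. Y \<inter> Z') ` (D - {Y})) ((r^2 + r * s + r - s^2) / (r^2 + s))
     ((s + 1) * r / (r^2 + s)) ((r - r^2) / (r^2 + s))"
  unfolding symmetric_design_def design2_def
proof (intro conjI ballI impI)
  let ?Bs = "(\<lambda>Z'. Y \<inter> Z') ` (D - {Y})"
  show "finite Y" by (rule delsarte_finite[OF D(2)[OF Y]])
  show "real (card Y) = (r^2 + r * s + r - s^2) / (r^2 + s)" by (rule card_delsarte_family_Y)
  show "real (card ?Bs) = (r^2 + r * s + r - s^2) / (r^2 + s)"
    using card_image[OF inj_on_delsarte_family_blocks] N D(1) Y card_delsarte_family_Y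
    by (simp add: card_Diff_singleton)
  show "b \<subseteq> Y" "real (card b) = (s + 1) * r / (r^2 + s)" if "b \<in> ?Bs" for b
    using that card_delsarte_family_inter by auto
  show "real (card {b\<in>?Bs. y \<in> b \<and> y' \<in> b}) = (r - r^2) / (r^2 + s)"
    if "y \<in> Y" "y' \<in> Y" "y \<noteq> y'" for y y'
  proof (rule card_blocks_through_pair[OF \<open>finite Y\<close> _ _ _ card_delsarte_family_blocks_through _ _ that])
    show "finite ?Bs" using D(1) by simp
    show "b \<subseteq> Y" "real (card b) = (s + 1) * r / (r^2 + s)" if "b \<in> ?Bs" for b
      using that card_delsarte_family_inter by auto
    show "real (card (b \<inter> b')) = (r - r^2) / (r^2 + s)" if "b \<in> ?Bs" "b' \<in> ?Bs" "b \<noteq> b'" for b b'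
      using card_delsarte_family_blocks_inter[OF that] .
    show "(r - r^2) / (r^2 + s) * (real (card Y) - 1) = (s + 1) * r / (r^2 + s) * ((s + 1) * r / (r^2 + s) - 1)"
      using delsarte_denominator_nonzero[OF D(2)[OF Y] D(2)[OF Z] YZ] unfolding card_delsarte_family_Y
      by (simp add: power2_eq_square field_simps)
  qed
qed
end

lemma delsarte_card_pos: "delsarte C \<Longrightarrow> card C > 0"
  using delsarte_card[of C] delsarte_finite[of C] s_neg v_pos by (auto simp: card_gt_0_iff)

lemma finite_delsarte_cocliques: "finite {C. delsarte C}"
  by (rule finite_subset[of _ "Pow {0..<v}"]) (auto dest: delsarte_less)

lemma card_delsarte_cocliques_le:
  assumes m: "\<And>C. delsarte C \<Longrightarrow> card C = m"
  shows "card {C. delsarte C} \<le> m + 1"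
proof (cases "\<exists>Y Z. delsarte Y \<and> delsarte Z \<and> Y \<noteq> Z")
  case True
  then obtain Y Z where "delsarte Y" "delsarte Z" "Y \<noteq> Z" by blast
  then show ?thesis using card_delsarte_family_le[OF finite_delsarte_cocliques] m by auto
next
  case False
  then have "card {C. delsarte C} \<le> 1" using finite_delsarte_cocliques by (auto simp: card_le_Suc0_iff_eq)
  then show ?thesis by simp
qed

lemma delsarte_cocliques_extremal:
  assumes m: "\<And>C. delsarte C \<Longrightarrow> card C = m"
  shows "card {C. delsarte C} = m + 1 \<longrightarrow> (\<exists>(P::nat set) Bs. symmetric_design P Bs ((r^2 + r * s + r - s^2) / (r^2 + s))
      ((s + 1) * r / (r^2 + s)) ((r - r^2) / (r^2 + s)))
    \<and> (\<forall>x<v. real (card {C\<in>{C. delsarte C}. x \<in> C}) = 1 + (s + 1) * r / (r^2 + s))"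
proof (intro impI, goal_cases)
  case 1
  then have N: "card {C. delsarte C} = m + 1" .
  obtain Y where Y: "delsarte Y" using N by (metis Collect_empty_eq add_is_0 card.empty one_neq_zero)
  have "card ({C. delsarte C} - {Y}) = card Y"
    using N m[OF Y] Y finite_delsarte_cocliques by (simp add: card_Diff_singleton)
  then have "card ({C. delsarte C} - {Y}) > 0" using delsarte_card_pos[OF Y] by simp
  then have "{C. delsarte C} - {Y} \<noteq> {}" using card_gt_0_iff by blast
  then obtain Z where Z: "delsarte Z" "Y \<noteq> Z" by blast
  have members: "\<And>C. C \<in> {C. delsarte C} \<Longrightarrow> delsarte C" "Y \<in> {C. delsarte C}" "Z \<in> {C. delsarte C}"
    using Y Z by simp_all
  have N': "card {C. delsarte C} = card Y + 1" using N m[OF Y] by simp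
  show ?case
    using delsarte_family_design[OF finite_delsarte_cocliques members Z(2) N']
      card_delsarte_family_members[OF finite_delsarte_cocliques members Z(2) N']
      card_delsarte_inter_eq[OF Y Z(1) Z(2)] by auto
qed

lemma lam_identity: "(1 + r) * real lam = s * s + s * (r * r + r + 1) + r * r + r"
  using rs_sum rs_prod delsarte_condition by (Groebner_Basis.algebra)

text \<open>With \<open>d = -((e\<^sup>+)\<^sup>2 + e\<^sup>-) > 0\<close>, part (e) reads \<open>|X \<inter> Y \<inter> Z| d = e\<^sup>+ (e\<^sup>+ - 1)\<close>; as \<open>d\<close> is
  coprime to \<open>e\<^sup>+\<close> it divides \<open>e\<^sup>+ - 1\<close>, and then \<open>lam_identity\<close> makes \<open>\<lambda>\<close> negative.\<close>

lemma coprime_no_three_delsarte: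
  assumes AB: "r = of_int A" "s = of_int B" "coprime A B" and r1: "r > 1"
    and X: "delsarte X" and Y: "delsarte Y" and Z: "delsarte Z"
    and XY: "X \<noteq> Y" and XZ: "X \<noteq> Z" and YZ: "Y \<noteq> Z"
  shows False
proof -
  define t where "t = card (X \<inter> Y \<inter> Z)"
  have tr: "real t * (r * r + s) = r - r * r"
    unfolding t_def by (rule card_delsarte_triple_inter[OF X Y Z XY XZ YZ])
  have "r - r * r < 0" using r1 by (simp add: algebra_simps)
  then have "real t * (r * r + s) < 0" using tr by simp
  then have dneg: "r * r + s < 0" by (auto simp: mult_less_0_iff)
  define d where "d = - (A * A + B)"
  have dr: "real_of_int d = - (r * r + s)" unfolding d_def AB by simp
  have dpos: "d > 0" using dneg dr by simp
  have "real t * real_of_int d = real_of_int A * real_of_int A - real_of_int A"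
    using tr dr unfolding AB by (Groebner_Basis.algebra)
  then have "real_of_int (int t * d) = real_of_int (A * (A - 1))" by (simp add: algebra_simps)
  then have td: "int t * d = A * (A - 1)" by (simp only: of_int_eq_iff)
  have "coprime d A"
  proof (rule coprimeI)
    fix g assume g1: "g dvd d" and g2: "g dvd A"
    then have "g dvd B" unfolding d_def by (metis dvd_add_right_iff dvd_minus_iff dvd_mult2)
    then show "is_unit g" using AB(3) g2 coprime_common_divisor by blast
  qed
  moreover have "d dvd A * (A - 1)" using td by (metis dvd_triv_right)
  ultimately have "d dvd (A - 1)" by (metis coprime_dvd_mult_right_iff mult.commute)
  moreover have "A - 1 > 0" using r1 AB(1) by simp
  ultimately have "d \<le> A - 1" by (rule zdvd_imp_le)
  then have dle: "real_of_int d \<le> r - 1" using AB(1) by simp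
  have "s * s + s * (r * r + r + 1) + r * r + r
      = (r * r + real_of_int d) * (real_of_int d - r - 1) + r * (r + 1)"
    using dr by (Groebner_Basis.algebra)
  also have "\<dots> \<le> (r * r + real_of_int d) * (- 2) + r * (r + 1)"
    using dle dpos by (intro add_right_mono mult_left_mono) auto
  also have "\<dots> < 0"
  proof -
    have "r * 1 < r * r" using r1 by (intro mult_strict_left_mono) auto
    then show ?thesis using dpos by (simp add: algebra_simps)
  qed
  finally have "(1 + r) * real lam < 0" using lam_identity by simp
  moreover have "(1 + r) * real lam \<ge> 0" using r_pos by simp
  ultimately show False by linarith
qed

lemma card_delsarte_cocliques_coprime:
  "(\<exists>A B :: int. r = of_int A \<and> s = of_int B \<and> coprime A B) \<and> r > 1 \<longrightarrow> card {C. delsarte C} \<le> 2"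
proof (intro impI, rule ccontr)
  assume coprime: "(\<exists>A B :: int. r = of_int A \<and> s = of_int B \<and> coprime A B) \<and> r > 1"
    and "\<not> card {C. delsarte C} \<le> 2"
  then obtain T where "T \<subseteq> {C. delsarte C}" "card T = 3"
    using obtain_subset_with_card_n[of 3 "{C. delsarte C}"] by auto
  then obtain X Y Z where "delsarte X" "delsarte Y" "delsarte Z" "X \<noteq> Y" "X \<noteq> Z" "Y \<noteq> Z"
    by (auto simp: card_3_iff)
  then show False using coprime_no_three_delsarte coprime by blast
qed

end

section \<open>The Delsarte condition from the spectrum\<close>

lemma srg_delsarte_from_spectrum:
  assumes srg: "srg v E k lam mu"
    and ep: "eigenvalue (adj_matrix v E) ep" and em: "eigenvalue (adj_matrix v E) em"
    and ord: "real k > ep" "ep > 0" "0 > em"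
    and cond: "real v * em = real (Polynomial.order em (char_poly (adj_matrix v E))) * (em - real k)"
  shows "srg_delsarte v E k lam mu ep em"
proof -
  interpret strongly_regular_graph v E k lam mu by unfold_locales (rule srg)
  have params: "ep + em = real lam - real mu" "ep * em = real mu - real k"
    using srg_eigenvalue_params[OF ep em] ord by auto
  have v: "0 < v"
    using eigenvalue_imp_nonzero_dim[OF _ ep] adj_matrix_eq_adjacency_mat adjacency_mat_carrier by metis
  have "real v * (em * (em - ep)) = real v * (real k * (1 + ep))"
    using srg_multiplicity[OF params] cond by (Groebner_Basis.algebra)
  then have "em * (em - ep) = real k * (1 + ep)" using v by simp
  then show ?thesis using params ord v by unfold_locales auto
qed

(* HOL-Algebra, imported via the Schur decomposition, also defines an order; in the statement
   below order means Polynomial.order. *)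
hide_const (open) Coset.order

theorem theorem1p2:
  fixes v k lam mu :: nat and E :: "nat \<Rightarrow> nat \<Rightarrow> bool" and ep em :: real
  defines "A \<equiv> adj_matrix v E"
  defines "mm \<equiv> order em (char_poly A)"
  defines "D \<equiv> {C. delsarte_coclique v E k em C}"
  assumes srg: "srg v E k lam mu"
    and prim: "primitive_graph v E"
    and eig_p: "eigenvalue A ep" and eig_m: "eigenvalue A em"
    and eig_all: "\<forall>x. eigenvalue A x \<longrightarrow> x \<in> {real k, ep, em}"
    and ord: "real k > ep" "ep > 0" "0 > em"
    and cond: "real v * em = real mm * (em - real k)"
  shows
    "(\<forall>Y\<in>D. \<forall>Z\<in>D. Y \<noteq> Z \<longrightarrow>
        symmetric_design (Y - Z) ((\<lambda>z. {y\<in>Y. E y z}) ` (Z - Y))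
          ((ep^2 - em^2) / (ep^2 + em)) (- em) (- (ep^2) - em)
      \<and> real (card (Y \<inter> Z)) = real mm - (ep^2 - em^2) / (ep^2 + em)
      \<and> real (card (Y \<inter> Z)) = (em + 1) * ep / (ep^2 + em)
      \<and> (\<forall>w<v. w \<notin> Y \<and> w \<notin> Z \<longrightarrow>
            real (card ({y\<in>Y. E y w} \<inter> (Y \<inter> Z))) = ep))
   \<and> card D \<le> mm + 1
   \<and> (card D = mm + 1 \<longrightarrow>
        (\<exists>(P::nat set) Bs. symmetric_design P Bs
            ((ep^2 + ep * em + ep - em^2) / (ep^2 + em))
            ((em + 1) * ep / (ep^2 + em))
            ((ep - ep^2) / (ep^2 + em)))
      \<and> (\<forall>x<v. real (card {C\<in>D. x \<in> C}) = 1 + (em + 1) * ep / (ep^2 + em)))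
   \<and> (\<forall>X\<in>D. \<forall>Y\<in>D. \<forall>Z\<in>D. X \<noteq> Y \<and> X \<noteq> Z \<and> Y \<noteq> Z \<longrightarrow>
        real (card (X \<inter> Y \<inter> Z)) = (ep - ep^2) / (ep^2 + em))
   \<and> ((\<exists>a b :: int. ep = of_int a \<and> em = of_int b \<and> coprime a b) \<and> ep > 1
        \<longrightarrow> card D \<le> 2)"
proof -
  interpret srg_delsarte v E k lam mu ep em
    using srg_delsarte_from_spectrum[OF srg eig_p[unfolded A_def] eig_m[unfolded A_def] ord] cond
    unfolding mm_def A_def by blast
  have card_mm: "card C = mm" if "delsarte C" for C
    using delsarte_card[OF that] cond s_minus_k_nonzero by simp
  show ?thesis
    unfolding D_def
    by (intro conjI delsarte_pair_properties[OF card_mm] card_delsarte_cocliques_le[OF card_mm]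
        delsarte_cocliques_extremal[OF card_mm] card_delsarte_triple_inter_eq card_delsarte_cocliques_coprime)
qed

end
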